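(* Let $X$ be a proper geodesic metric space, $e\in X$, and $N$ a Morse gauge. Let $(x_n),(y_n)\subset X^{(N)}_e$ be sequences converging at infinity to $\lambda^-\neq\lambda^+\in\partial X^{(N)}_e$ respectively. Let $\gamma_{x,n}=[e,x_n]$, $\gamma_{y,n}=[e,y_n]$ be $N$-Morse geodesics, and let $\gamma_x,\gamma_y$ be geodesic rays from $e$ which are subsequential limits, uniformly on compact sets, of $(\gamma_{x,n})$ and $(\gamma_{y,n})$ respectively. For each $n$ let $\gamma_n$ be a geodesic joining $\gamma_x(n)$ and $\gamma_y(n)$. Then there exist a Morse gauge $N'$ depending only on $N$ and a biinfinite $N'$-Morse geodesic $\gamma:(-\infty,\infty)\to X$ such that a subsequence of $(\gamma_n)$ converges uniformly on compact sets to $\gamma$. Moreover $\gamma\subset\mathcal N_{4N(3,0)}(\gamma_x\cup\gamma_y)$.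
   Context: A Morse gauge is a function $N:\mathbb{R}_{\geq 1}\times\mathbb{R}_{\geq 0}\to\mathbb{R}_{\geq 0}$; a (quasi)geodesic is $N$-Morse if every $(K,C)$-quasigeodesic with endpoints on it lies in its $N(K,C)$-neighborhood. $X^{(N)}_e$ is the set of $y\in X$ such that some geodesic $[e,y]$ is $N$-Morse; $\partial X^{(N)}_e$ is its sequential Gromov boundary (sequences $(x_n)$ with $(x_i\cdot x_j)_e\to\infty$, modulo $(x_n)\sim(y_n)$ iff $(x_i\cdot y_j)_e\to\infty$, where $(x\cdot y)_z=\frac12(d(z,x)+d(z,y)-d(x,y))$). $\mathcal N_r(A)$ denotes the $r$-neighborhood of $A$. *)

theory Defs
  imports "HOL-Analysis.Analysis"
begin

text \<open>Metric spaces are given abstractly as a carrier M with a metric d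
  (locale predicate Metric_space), so that "N' depends only on N" can be
  stated uniformly over all metric spaces on a given carrier type.\<close>

definition proper_mspace :: "'a set \<Rightarrow> ('a \<Rightarrow> 'a \<Rightarrow> real) \<Rightarrow> bool" where
  "proper_mspace M d \<longleftrightarrow>
     (\<forall>x\<in>M. \<forall>r. compactin (Metric_space.mtopology M d) (Metric_space.mcball M d x r))"

text \<open>gamma restricted to the parameter set I is an isometric embedding
  (geodesic segment for I = [a,b], ray for I = [0,oo), biinfinite for I = UNIV).\<close>
definition isometric_on :: "'a set \<Rightarrow> ('a \<Rightarrow> 'a \<Rightarrow> real) \<Rightarrow> (real \<Rightarrow> 'a) \<Rightarrow> real set \<Rightarrow> bool" where
  "isometric_on M d \<gamma> I \<longleftrightarrow> \<gamma> ` I \<subseteq> M \<and> (\<forall>s\<in>I. \<forall>t\<in>I. d (\<gamma> s) (\<gamma> t) = \<bar>s - t\<bar>)"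

definition geodesic_mspace :: "'a set \<Rightarrow> ('a \<Rightarrow> 'a \<Rightarrow> real) \<Rightarrow> bool" where
  "geodesic_mspace M d \<longleftrightarrow>
     (\<forall>x\<in>M. \<forall>y\<in>M. \<exists>\<gamma>. isometric_on M d \<gamma> {0..d x y} \<and> \<gamma> 0 = x \<and> \<gamma> (d x y) = y)"

text \<open>(K,C)-quasigeodesic q : [a,b] -> M (no continuity required).\<close>
definition quasigeodesic :: "'a set \<Rightarrow> ('a \<Rightarrow> 'a \<Rightarrow> real) \<Rightarrow> real \<Rightarrow> real \<Rightarrow> (real \<Rightarrow> 'a) \<Rightarrow> real \<Rightarrow> real \<Rightarrow> bool" where
  "quasigeodesic M d K C q a b \<longleftrightarrow> a \<le> b \<and> q ` {a..b} \<subseteq> M \<and>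
     (\<forall>s\<in>{a..b}. \<forall>t\<in>{a..b}. \<bar>s - t\<bar> / K - C \<le> d (q s) (q t) \<and> d (q s) (q t) \<le> K * \<bar>s - t\<bar> + C)"

definition nbhd :: "'a set \<Rightarrow> ('a \<Rightarrow> 'a \<Rightarrow> real) \<Rightarrow> real \<Rightarrow> 'a set \<Rightarrow> 'a set" where
  "nbhd M d r A = {x\<in>M. \<exists>y\<in>A. d x y \<le> r}"

definition morse_gauge :: "(real \<Rightarrow> real \<Rightarrow> real) \<Rightarrow> bool" where
  "morse_gauge N \<longleftrightarrow> (\<forall>K C. 1 \<le> K \<longrightarrow> 0 \<le> C \<longrightarrow> 0 \<le> N K C)"

definition morse :: "'a set \<Rightarrow> ('a \<Rightarrow> 'a \<Rightarrow> real) \<Rightarrow> (real \<Rightarrow> real \<Rightarrow> real) \<Rightarrow> (real \<Rightarrow> 'a) \<Rightarrow> real set \<Rightarrow> bool" where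
  "morse M d N \<gamma> I \<longleftrightarrow>
     (\<forall>K C q a b. 1 \<le> K \<longrightarrow> 0 \<le> C \<longrightarrow> quasigeodesic M d K C q a b \<longrightarrow>
        q a \<in> \<gamma> ` I \<longrightarrow> q b \<in> \<gamma> ` I \<longrightarrow> q ` {a..b} \<subseteq> nbhd M d (N K C) (\<gamma> ` I))"

definition morse_stratum :: "'a set \<Rightarrow> ('a \<Rightarrow> 'a \<Rightarrow> real) \<Rightarrow> (real \<Rightarrow> real \<Rightarrow> real) \<Rightarrow> 'a \<Rightarrow> 'a set" where
  "morse_stratum M d N e = {y\<in>M. \<exists>\<gamma>. isometric_on M d \<gamma> {0..d e y} \<and> \<gamma> 0 = e \<and>
      \<gamma> (d e y) = y \<and> morse M d N \<gamma> {0..d e y}}"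

definition gprod :: "('a \<Rightarrow> 'a \<Rightarrow> real) \<Rightarrow> 'a \<Rightarrow> 'a \<Rightarrow> 'a \<Rightarrow> real" where
  "gprod d z x y = (d z x + d z y - d x y) / 2"

definition converges_at_infinity :: "('a \<Rightarrow> 'a \<Rightarrow> real) \<Rightarrow> 'a \<Rightarrow> (nat \<Rightarrow> 'a) \<Rightarrow> bool" where
  "converges_at_infinity d e xs \<longleftrightarrow>
     (\<forall>B. \<exists>n0. \<forall>i\<ge>n0. \<forall>j\<ge>n0. B \<le> gprod d e (xs i) (xs j))"

definition gromov_equiv :: "('a \<Rightarrow> 'a \<Rightarrow> real) \<Rightarrow> 'a \<Rightarrow> (nat \<Rightarrow> 'a) \<Rightarrow> (nat \<Rightarrow> 'a) \<Rightarrow> bool" where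
  "gromov_equiv d e xs ys \<longleftrightarrow>
     (\<forall>B. \<exists>n0. \<forall>i\<ge>n0. \<forall>j\<ge>n0. B \<le> gprod d e (xs i) (ys j))"

definition subseq_limit_ray ::
  "('a \<Rightarrow> 'a \<Rightarrow> real) \<Rightarrow> (nat \<Rightarrow> real) \<Rightarrow> (nat \<Rightarrow> real \<Rightarrow> 'a) \<Rightarrow> (real \<Rightarrow> 'a) \<Rightarrow> bool" where
  "subseq_limit_ray d L gs g \<longleftrightarrow> (\<exists>\<phi>. strict_mono \<phi> \<and>
     (\<forall>T \<epsilon>. 0 < \<epsilon> \<longrightarrow> (\<exists>k0::nat. \<forall>k\<ge>k0. T \<le> L (\<phi> k) \<and>
        (\<forall>t\<in>{0..T}. d (gs (\<phi> k) t) (g t) < \<epsilon>))))"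

end

theory Submission
  imports Defs "HOL-Library.Diagonal_Subsequence"
begin

text \<open>
  If the connecting geodesics \<open>\<gamma>\<^sub>n\<close> stayed farther and farther from \<open>e\<close>, the point of
  \<open>\<gamma>\<^sub>n\<close> closest to \<open>e\<close> would be close to both Morse geodesics \<open>[e,x\<^sub>i]\<close> and \<open>[e,y\<^sub>j]\<close>
  (apply the Morse property to the path "geodesic to a closest point, along \<open>\<gamma>\<^sub>n\<close>, geodesic to
  \<open>e\<close>", a (3,C)-quasigeodesic), so these geodesics would fellow travel for longer and longer and
  \<open>(x\<^sub>i \<cdot> y\<^sub>j)\<^sub>e \<rightarrow> \<infinity>\<close>, contradicting \<open>\<lambda>\<^sup>- \<noteq> \<lambda>\<^sup>+\<close>. Hence infinitely many \<open>\<gamma>\<^sub>n\<close> meet a fixed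
  ball around \<open>e\<close>; reparametrised at their closest points to \<open>e\<close>, a subsequence converges
  (Arzela-Ascoli in the proper space) to a biinfinite geodesic \<open>\<gamma>\<close> whose two halves stay
  within \<open>N(3,0)\<close> of \<open>\<gamma>\<^sub>x\<close> and \<open>\<gamma>\<^sub>y\<close>. Any two points on one half are therefore near a single
  N-Morse segment, and a quasigeodesic with endpoints on that half is shadowed on the segment,
  whose parameter varies coarsely monotonically, so it stays near \<open>\<gamma>\<close>. A quasigeodesic joining
  the two halves is cut at a point nearly closest to \<open>\<gamma>(0)\<close> and completed by a geodesic to
  \<open>\<gamma>(0)\<close>, reducing to the one-sided case.
\<close>

section \<open>Coarse real analysis\<close>

lemma coarse_ivt:
  fixes f :: "real \<Rightarrow> real"
  assumes ab: "a \<le> b" and L: "\<forall>s\<in>{a..b}. \<forall>s'\<in>{a..b}. \<bar>f s - f s'\<bar> \<le> Lc*\<bar>s - s'\<bar> + J"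
    and Lc: "0 \<le> Lc" and fa: "f a \<le> w" and fb: "w \<le> f b"
  shows "\<exists>s\<in>{a..b}. \<bar>f s - w\<bar> \<le> J + 1"
proof (cases "f b \<le> w")
  case True
  have aa: "a \<in> {a..b}" using ab by simp
  have "\<bar>f a - f a\<bar> \<le> Lc*\<bar>a - a\<bar> + J" using L aa by blast
  then have "0 \<le> J" by simp
  then show ?thesis using True fb ab by (intro bexI[of _ b]) auto
next
  case False
  define S where "S = {s\<in>{a..b}. f s \<le> w}"
  define \<sigma> where "\<sigma> = Sup S"
  have aS: "a \<in> S" using ab fa S_def by auto
  have bdd: "bdd_above S" unfolding S_def by (rule bdd_aboveI[of _ b]) auto
  have sig1: "a \<le> \<sigma>" using cSup_upper[OF aS bdd] \<sigma>_def by simp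
  have Sne: "S \<noteq> {}" using aS by blast
  have Sb: "\<And>x. x \<in> S \<Longrightarrow> x \<le> b" unfolding S_def by simp
  have sig2: "\<sigma> \<le> b" unfolding \<sigma>_def by (rule cSup_least[OF Sne Sb])
  note sig = sig1 sig2
  define \<eta> where "\<eta> = 1 / (2*Lc + 2)"
  have eta: "0 < \<eta>" "2*Lc*\<eta> \<le> 1" using Lc by (auto simp: \<eta>_def field_simps)
  obtain s' where s': "s' \<in> S" "\<sigma> - \<eta> < s'"
    using less_cSupD[of S "\<sigma> - \<eta>"] aS eta \<sigma>_def by fastforce
  have s'2: "s' \<le> \<sigma>" using cSup_upper[OF s'(1) bdd] \<sigma>_def by auto
  define s'' where "s'' = min b (\<sigma> + \<eta>)"
  have s''1: "s'' \<in> {a..b}" using sig eta by (auto simp: s''_def)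
  have s''2: "w < f s''"
  proof (cases "\<sigma> < b")
    case True
    then have "\<sigma> < s''" using eta by (auto simp: s''_def)
    then have "s'' \<notin> S" using cSup_upper[of s'' S] bdd \<sigma>_def by force
    then show ?thesis using s''1 S_def by auto
  next
    case False
    then have "s'' = b" using sig eta by (auto simp: s''_def)
    then show ?thesis using \<open>\<not> f b \<le> w\<close> by auto
  qed
  have s'I: "s' \<in> {a..b}" "f s' \<le> w" using s' S_def by auto
  have "\<bar>f s'' - f s'\<bar> \<le> Lc*\<bar>s'' - s'\<bar> + J" using L s''1 s'I by auto
  moreover have "\<bar>s'' - s'\<bar> \<le> 2*\<eta>" using s' s'2 sig eta by (auto simp: s''_def)
  moreover have "Lc*\<bar>s'' - s'\<bar> \<le> Lc*(2*\<eta>)" using calculation(2) Lc by (rule mult_left_mono)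
  ultimately have fin: "\<bar>f s' - w\<bar> \<le> J + 1" using s'I s''2 eta by argo
  show ?thesis using s'I(1) fin by blast
qed

lemma coarse_ivt_decreasing:
  fixes f :: "real \<Rightarrow> real"
  assumes ab: "a \<le> b" and L: "\<forall>s\<in>{a..b}. \<forall>s'\<in>{a..b}. \<bar>f s - f s'\<bar> \<le> Lc*\<bar>s - s'\<bar> + J"
    and Lc: "0 \<le> Lc" and fa: "w \<le> f a" and fb: "f b \<le> w"
  shows "\<exists>s\<in>{a..b}. \<bar>f s - w\<bar> \<le> J + 1"
proof -
  have "\<exists>s\<in>{a..b}. \<bar>(- f s) - (- w)\<bar> \<le> J + 1"
    by (rule coarse_ivt[OF ab _ Lc]) (use L fa fb in \<open>auto simp: abs_minus_commute\<close>)
  then show ?thesis by (auto simp: abs_minus_commute)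
qed

text \<open>A coarse embedding of an interval cannot dip far below both endpoint values: otherwise the
  coarse intermediate value theorem on either side would give two far-apart points with nearly
  equal values.\<close>
lemma coarse_embedding_lower_bound:
  fixes f :: "real \<Rightarrow> real"
  assumes "a \<le> b" and K: "1 \<le> K" and J: "0 \<le> J"
   and L: "\<forall>s\<in>{a..b}. \<forall>s'\<in>{a..b}. \<bar>f s - f s'\<bar> \<le> K*\<bar>s - s'\<bar> + J"
   and E: "\<forall>s\<in>{a..b}. \<forall>s'\<in>{a..b}. \<bar>s - s'\<bar> \<le> K*(\<bar>f s - f s'\<bar> + J)"
   and s: "s \<in> {a..b}"
  shows "min (f a) (f b) - (K*K*(3*J+2) + 4*J + 3) \<le> f s"
proof (rule ccontr)
  define B0 where "B0 = K*K*(3*J+2) + 4*J + 3"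
  assume "\<not> ?thesis"
  then have fs: "f s < f a - B0" "f s < f b - B0" unfolding B0_def by auto
  have B0: "0 \<le> B0" using K J unfolding B0_def by (simp add: add_nonneg_nonneg)
  define w where "w = f s + B0/2"
  have L1: "\<forall>x\<in>{a..s}. \<forall>y\<in>{a..s}. \<bar>f x - f y\<bar> \<le> K*\<bar>x - y\<bar> + J" using L s by auto
  have L2: "\<forall>x\<in>{s..b}. \<forall>y\<in>{s..b}. \<bar>f x - f y\<bar> \<le> K*\<bar>x - y\<bar> + J" using L s by auto
  obtain s1 where s1: "s1 \<in> {a..s}" "\<bar>f s1 - w\<bar> \<le> J + 1"
    using coarse_ivt_decreasing[OF _ L1, of w] s fs B0 K unfolding w_def by auto
  obtain s2 where s2: "s2 \<in> {s..b}" "\<bar>f s2 - w\<bar> \<le> J + 1"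
    using coarse_ivt[OF _ L2, of w] s fs B0 K unfolding w_def by auto
  have i1: "s1 \<in> {a..b}" "s2 \<in> {a..b}" using s1 s2 s by auto
  have "\<bar>s1 - s2\<bar> \<le> K*(\<bar>f s1 - f s2\<bar> + J)" using E i1 by auto
  moreover have "\<bar>f s1 - f s2\<bar> + J \<le> 3*J + 2" using s1 s2 by argo
  moreover have "K*(\<bar>f s1 - f s2\<bar> + J) \<le> K*(3*J+2)" using calculation(2) K by (intro mult_left_mono) auto
  ultimately have "\<bar>s1 - s2\<bar> \<le> K*(3*J+2)" by linarith
  then have "K*\<bar>s1 - s2\<bar> \<le> K*(K*(3*J+2))" using K by (simp add: mult_left_mono)
  moreover have "\<bar>s1 - s2\<bar> = s2 - s1" using s1 s2 by auto
  ultimately have kk: "K*(s2 - s1) \<le> K*(K*(3*J+2))" by simp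
  moreover have "\<bar>s1 - s\<bar> = s - s1" "\<bar>s2 - s\<bar> = s2 - s" "\<bar>s1 - s2\<bar> = s2 - s1" using s1 s2 by auto
  moreover have "\<bar>f s1 - f s\<bar> \<le> K*\<bar>s1 - s\<bar> + J" "\<bar>f s2 - f s\<bar> \<le> K*\<bar>s2 - s\<bar> + J"
    using L i1 s by blast+
  ultimately have "\<bar>f s1 - f s\<bar> \<le> K*(s - s1) + J" "\<bar>f s2 - f s\<bar> \<le> K*(s2 - s) + J"
    by simp_all
  moreover have "K*(s2 - s1) = K*(s - s1) + K*(s2 - s)" by (simp add: algebra_simps)
  moreover have "B0 = K*(K*(3*J+2)) + 4*J + 3" unfolding B0_def by (simp add: algebra_simps)
  ultimately show False using kk s1(2) s2(2) fs unfolding w_def by argo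
qed

lemma coarse_embedding_upper_bound:
  fixes f :: "real \<Rightarrow> real"
  assumes ab: "a \<le> b" and K: "1 \<le> K" and J: "0 \<le> J"
   and L: "\<forall>s\<in>{a..b}. \<forall>s'\<in>{a..b}. \<bar>f s - f s'\<bar> \<le> K*\<bar>s - s'\<bar> + J"
   and E: "\<forall>s\<in>{a..b}. \<forall>s'\<in>{a..b}. \<bar>s - s'\<bar> \<le> K*(\<bar>f s - f s'\<bar> + J)"
   and s: "s \<in> {a..b}"
  shows "f s \<le> max (f a) (f b) + (K*K*(3*J+2) + 4*J + 3)"
proof -
  have "min (- f a) (- f b) - (K*K*(3*J+2) + 4*J + 3) \<le> - f s"
    by (rule coarse_embedding_lower_bound[OF ab K J _ _ s, of "\<lambda>x. - f x"]) (use L E in \<open>auto simp: abs_minus_commute\<close>)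
  then show ?thesis by linarith
qed

lemma exists_almost_min:
  fixes f :: "real \<Rightarrow> real"
  assumes "a \<le> b" and "\<forall>t\<in>{a..b}. 0 \<le> f t"
  shows "\<exists>\<tau>\<in>{a..b}. \<forall>t\<in>{a..b}. f \<tau> \<le> f t + 1"
proof -
  have ne: "f ` {a..b} \<noteq> {}" and bdd: "bdd_below (f ` {a..b})"
    using assms by (auto intro: bdd_belowI[of _ 0])
  obtain \<tau> where "\<tau> \<in> {a..b}" "f \<tau> < Inf (f ` {a..b}) + 1"
    using cInf_lessD[OF ne, of "Inf (f ` {a..b}) + 1"] by auto
  moreover have "Inf (f ` {a..b}) \<le> f t" if "t \<in> {a..b}" for t using cInf_lower[OF _ bdd] that by auto
  ultimately show ?thesis by force
qed

definition rat_enum :: "nat \<Rightarrow> real" where "rat_enum i = of_rat (nat_to_rat_surj i)"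

lemma rat_enum_dense:
  assumes "x < y" shows "\<exists>i. x < rat_enum i \<and> rat_enum i < y"
proof -
  obtain q where q: "q \<in> \<rat>" "x < q" "q < y" using Rats_dense_in_real[OF assms] by auto
  obtain z where z: "q = of_rat z" using q(1) by (auto elim: Rats_cases)
  obtain i where "z = nat_to_rat_surj i" using surj_nat_to_rat_surj by (metis surjD)
  then show ?thesis using q z by (auto simp: rat_enum_def)
qed

text \<open>Radii produced by the shadowing arguments below: \<open>cover_radius N \<rho>\<close> bounds the distance
  from a Morse segment to a geodesic whose ends are \<open>\<rho>\<close>-close to it, \<open>quasi_radius N K C \<rho>\<close> does
  the same for a (K,C)-quasigeodesic, and \<open>limit_gauge\<close> also covers the quasigeodesics that are
  cut and completed by a geodesic.\<close>
definition cover_radius :: "(real \<Rightarrow> real \<Rightarrow> real) \<Rightarrow> real \<Rightarrow> real" where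
  "cover_radius N \<rho> = 3 * (N 1 (2*\<rho>) + \<rho>) + 2*\<rho> + 1"

definition quasi_radius :: "(real \<Rightarrow> real \<Rightarrow> real) \<Rightarrow> real \<Rightarrow> real \<Rightarrow> real \<Rightarrow> real" where
  "quasi_radius N K C \<rho> = (N K (C + 2*\<rho>) + \<rho>) + cover_radius N \<rho> +
     (2*(N K (C + 2*\<rho>) + \<rho>) + (K*K*(3*(C + 2*(N K (C + 2*\<rho>) + \<rho>))+2) + 4*(C + 2*(N K (C + 2*\<rho>) + \<rho>)) + 3) + 2*\<rho>)"

definition limit_gauge :: "(real \<Rightarrow> real \<Rightarrow> real) \<Rightarrow> real \<Rightarrow> real \<Rightarrow> real \<Rightarrow> real" where
  "limit_gauge N \<rho> K C = max (quasi_radius N K C \<rho>) (quasi_radius N (3*K) (C+1) \<rho>)"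

lemma quasi_radius_nonneg:
  assumes "morse_gauge N" "1 \<le> K" "0 \<le> C" "0 \<le> \<rho>"
  shows "0 \<le> quasi_radius N K C \<rho>"
proof -
  have a: "0 \<le> N K (C + 2*\<rho>)" "0 \<le> N 1 (2*\<rho>)" using assms unfolding morse_gauge_def by auto
  have b: "0 \<le> K*K*(3*(C + 2*(N K (C + 2*\<rho>) + \<rho>))+2)" using a assms by auto
  show ?thesis using a b assms unfolding quasi_radius_def cover_radius_def by argo
qed

lemma morse_gauge_limit_gauge: "morse_gauge N \<Longrightarrow> 0 \<le> \<rho> \<Longrightarrow> morse_gauge (limit_gauge N \<rho>)"
  unfolding morse_gauge_def limit_gauge_def
  by (metis (no_types, lifting) quasi_radius_nonneg max.coboundedI1 morse_gauge_def)

definition near_common_morse ::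
  "'a set \<Rightarrow> ('a \<Rightarrow> 'a \<Rightarrow> real) \<Rightarrow> (real \<Rightarrow> real \<Rightarrow> real) \<Rightarrow> real \<Rightarrow> 'a \<Rightarrow> 'a \<Rightarrow> bool" where
  "near_common_morse M d N r x y \<longleftrightarrow> (\<exists>\<alpha> A u1 u2. morse M d N \<alpha> {0..A} \<and> isometric_on M d \<alpha> {0..A} \<and>
     u1 \<in> {0..A} \<and> u2 \<in> {0..A} \<and> d x (\<alpha> u1) \<le> r \<and> d y (\<alpha> u2) \<le> r)"

definition eventually_isometric :: "'a set \<Rightarrow> ('a \<Rightarrow> 'a \<Rightarrow> real) \<Rightarrow> (nat \<Rightarrow> real \<Rightarrow> 'a) \<Rightarrow> bool" where
  "eventually_isometric M d H \<longleftrightarrow> (\<forall>T. \<exists>k0. \<forall>k\<ge>k0. isometric_on M d (H k) {-T..T})"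

lemma eventually_isometricD:
  assumes "eventually_isometric M d H"
  obtains k0 where "\<And>k s t. k0 \<le> k \<Longrightarrow> \<bar>s\<bar> \<le> T \<Longrightarrow> \<bar>t\<bar> \<le> T \<Longrightarrow> d (H k s) (H k t) = \<bar>s - t\<bar>"
proof -
  obtain k0 where "\<forall>k\<ge>k0. isometric_on M d (H k) {-T..T}"
    using assms unfolding eventually_isometric_def by blast
  then show thesis
    by (intro that[of k0]) (auto simp: isometric_on_def abs_le_iff)
qed

lemma eventually_isometric_subseq:
  assumes "eventually_isometric M d H" "strict_mono r"
  shows "eventually_isometric M d (\<lambda>k. H (r k))"
  unfolding eventually_isometric_def
proof
  fix T
  obtain k0 where k0: "\<forall>k\<ge>k0. isometric_on M d (H k) {-T..T}"
    using assms(1) unfolding eventually_isometric_def by blast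
  show "\<exists>k0. \<forall>k\<ge>k0. isometric_on M d (H (r k)) {-T..T}"
  proof (intro exI[of _ k0] allI impI)
    fix k assume "k0 \<le> k"
    then have "k0 \<le> r k" using seq_suble[OF assms(2), of k] by linarith
    then show "isometric_on M d (H (r k)) {-T..T}" using k0 by blast
  qed
qed

lemma subseq_limit_rayD:
  assumes "subseq_limit_ray d L gs g" and "0 < \<epsilon>"
  shows "\<exists>i\<ge>n0. T \<le> L i \<and> (\<forall>t\<in>{0..T}. d (gs i t) (g t) < \<epsilon>)"
proof -
  obtain \<phi> where \<phi>: "strict_mono \<phi>" "\<forall>T \<epsilon>. 0 < \<epsilon> \<longrightarrow> (\<exists>k0::nat. \<forall>k\<ge>k0. T \<le> L (\<phi> k) \<and>
      (\<forall>t\<in>{0..T}. d (gs (\<phi> k) t) (g t) < \<epsilon>))"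
    using assms(1) unfolding subseq_limit_ray_def by blast
  obtain k0 where k0: "\<forall>k\<ge>k0. T \<le> L (\<phi> k) \<and> (\<forall>t\<in>{0..T}. d (gs (\<phi> k) t) (g t) < \<epsilon>)"
    using \<phi>(2) assms(2) by blast
  have "n0 \<le> \<phi> (max k0 n0)" using seq_suble[OF \<phi>(1), of "max k0 n0"] by linarith
  then show ?thesis using k0 by (intro exI[of _ "\<phi> (max k0 n0)"]) auto
qed

context Metric_space begin

section \<open>Geodesics and quasigeodesics\<close>

lemma isometric_on_mem: "isometric_on M d g I \<Longrightarrow> t \<in> I \<Longrightarrow> g t \<in> M"
  unfolding isometric_on_def by auto

lemma isometric_on_dist: "isometric_on M d g I \<Longrightarrow> s \<in> I \<Longrightarrow> t \<in> I \<Longrightarrow> d (g s) (g t) = \<bar>s - t\<bar>"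
  unfolding isometric_on_def by auto

lemma isometric_on_subset: "isometric_on M d g I \<Longrightarrow> J \<subseteq> I \<Longrightarrow> isometric_on M d g J"
  unfolding isometric_on_def by auto

lemma isometric_on_reflect:
  assumes "isometric_on M d g {a..b}"
  shows "isometric_on M d (\<lambda>t. g (a + b - t)) {a..b}"
  using assms unfolding isometric_on_def by (auto simp: abs_minus_commute)

lemma isometric_on_translate:
  assumes "isometric_on M d g {a..b}"
  shows "isometric_on M d (\<lambda>t. g (t + c)) {a-c..b-c}"
  using assms unfolding isometric_on_def by (auto simp: image_subset_iff)

lemma isometric_on_segment:
  assumes "isometric_on M d g {a..b}" "g a = x" "g b = y" "t \<in> {a..b}"
  shows "g t \<in> M" "d x (g t) = t - a" "d (g t) y = b - t"
  using assms isometric_on_mem isometric_on_dist[OF assms(1), of a t]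
    isometric_on_dist[OF assms(1), of t b] by auto

lemma geodesic_segment_exists:
  assumes "geodesic_mspace M d" "x \<in> M" "y \<in> M"
  obtains g where "isometric_on M d g {0..d x y}" "g 0 = x" "g (d x y) = y"
  using assms unfolding geodesic_mspace_def by meson

lemma geodesic_from_base:
  "isometric_on M d \<alpha> {0..A} \<Longrightarrow> \<alpha> 0 = e \<Longrightarrow> u \<in> {0..A} \<Longrightarrow> \<alpha> u \<in> M \<and> d e (\<alpha> u) = u"
  using isometric_on_mem[of \<alpha> "{0..A}" u] isometric_on_dist[of \<alpha> "{0..A}" 0 u] by auto

lemma ray_from_base:
  "isometric_on M d g {0..} \<Longrightarrow> g 0 = e \<Longrightarrow> 0 \<le> t \<Longrightarrow> g t \<in> M \<and> d e (g t) = t"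
  using isometric_on_mem[of g "{0..}" t] isometric_on_dist[of g "{0..}" 0 t] by auto

lemma isometric_on_base_dist_bounds:
  assumes z: "isometric_on M d \<zeta> {0..L}" and \<sigma>: "\<sigma> \<in> {0..L}" and eM: "e \<in> M"
  shows "d e (\<zeta> 0) - d e (\<zeta> \<sigma>) \<le> \<sigma>" "d e (\<zeta> L) - d e (\<zeta> \<sigma>) \<le> L - \<sigma>"
proof -
  have L: "0 \<in> {0..L}" "L \<in> {0..L}" using \<sigma> by auto
  then have "\<zeta> 0 \<in> M" "\<zeta> L \<in> M" "\<zeta> \<sigma> \<in> M" using isometric_on_mem[OF z] \<sigma> by auto
  then have "d e (\<zeta> 0) \<le> d e (\<zeta> \<sigma>) + d (\<zeta> \<sigma>) (\<zeta> 0)" "d e (\<zeta> L) \<le> d e (\<zeta> \<sigma>) + d (\<zeta> \<sigma>) (\<zeta> L)"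
    using triangle eM by blast+
  moreover have "d (\<zeta> \<sigma>) (\<zeta> 0) = \<sigma>" "d (\<zeta> \<sigma>) (\<zeta> L) = L - \<sigma>"
    using isometric_on_dist[OF z] L \<sigma> by auto
  ultimately show "d e (\<zeta> 0) - d e (\<zeta> \<sigma>) \<le> \<sigma>" "d e (\<zeta> L) - d e (\<zeta> \<sigma>) \<le> L - \<sigma>" by linarith+
qed

lemma triangle4: "x \<in> M \<Longrightarrow> y \<in> M \<Longrightarrow> z \<in> M \<Longrightarrow> w \<in> M \<Longrightarrow> d x w \<le> d x y + d y z + d z w"
  using triangle[of x y w] triangle[of y z w] by fastforce

lemma isometric_on_quasigeodesic: "isometric_on M d g {a..b} \<Longrightarrow> a \<le> b \<Longrightarrow> quasigeodesic M d 1 0 g a b"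
  unfolding quasigeodesic_def isometric_on_def by auto

lemma quasigeodesic_mem: "quasigeodesic M d K C q a b \<Longrightarrow> s \<in> {a..b} \<Longrightarrow> q s \<in> M"
  unfolding quasigeodesic_def by auto

lemma quasigeodesic_intro_ordered:
  assumes "a \<le> b" "q ` {a..b} \<subseteq> M"
    and "\<And>s t. s \<in> {a..b} \<Longrightarrow> t \<in> {a..b} \<Longrightarrow> s \<le> t \<Longrightarrow>
           (t - s) / K - C \<le> d (q s) (q t) \<and> d (q s) (q t) \<le> K * (t - s) + C"
  shows "quasigeodesic M d K C q a b"
  unfolding quasigeodesic_def
proof (intro conjI ballI)
  fix s t assume "s \<in> {a..b}" "t \<in> {a..b}"
  then have "\<bar>s - t\<bar> / K - C \<le> d (q s) (q t) \<and> d (q s) (q t) \<le> K * \<bar>s - t\<bar> + C"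
    using assms(3)[of s t] assms(3)[of t s] commute[of "q s" "q t"] by (cases "s \<le> t") auto
  then show "\<bar>s - t\<bar> / K - C \<le> d (q s) (q t)" "d (q s) (q t) \<le> K * \<bar>s - t\<bar> + C" by auto
qed (use assms in auto)

lemma quasigeodesic_reflect:
  assumes "quasigeodesic M d K C q a b"
  shows "quasigeodesic M d K C (\<lambda>t. q (a + b - t)) a b"
  unfolding quasigeodesic_def
proof (intro conjI ballI)
  show "a \<le> b" "(\<lambda>t. q (a + b - t)) ` {a..b} \<subseteq> M"
    using assms quasigeodesic_mem by (auto simp: quasigeodesic_def)
  fix s t assume "s \<in> {a..b}" "t \<in> {a..b}"
  then have "a + b - s \<in> {a..b}" "a + b - t \<in> {a..b}" and "\<bar>(a + b - s) - (a + b - t)\<bar> = \<bar>s - t\<bar>"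
    by (auto simp: abs_minus_commute)
  then show "\<bar>s - t\<bar> / K - C \<le> d (q (a + b - s)) (q (a + b - t))"
    "d (q (a + b - s)) (q (a + b - t)) \<le> K * \<bar>s - t\<bar> + C"
    using assms unfolding quasigeodesic_def by metis+
qed

lemma quasigeodesic_perturb:
  assumes q: "quasigeodesic M d K C q a b"
    and p: "\<forall>s\<in>{a..b}. q' s \<in> M \<and> d (q s) (q' s) \<le> \<rho>"
  shows "quasigeodesic M d K (C + 2*\<rho>) q' a b"
  unfolding quasigeodesic_def
proof (intro conjI ballI)
  show "a \<le> b" using q unfolding quasigeodesic_def by auto
  show "q' ` {a..b} \<subseteq> M" using p by auto
  fix s t assume s: "s \<in> {a..b}" and t: "t \<in> {a..b}"
  have qs: "q s \<in> M" "q t \<in> M" using q s t unfolding quasigeodesic_def by auto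
  have ps: "q' s \<in> M" "q' t \<in> M" "d (q s) (q' s) \<le> \<rho>" "d (q t) (q' t) \<le> \<rho>" using p s t by auto
  have Q: "\<bar>s - t\<bar> / K - C \<le> d (q s) (q t)" "d (q s) (q t) \<le> K * \<bar>s - t\<bar> + C"
    using q s t unfolding quasigeodesic_def by auto
  have a1: "d (q s) (q t) \<le> d (q s) (q' s) + d (q' s) (q' t) + d (q' t) (q t)"
    using triangle[of "q s" "q' s" "q t"] triangle[of "q' s" "q' t" "q t"] qs ps by auto
  have a2: "d (q' s) (q' t) \<le> d (q' s) (q s) + d (q s) (q t) + d (q t) (q' t)"
    using triangle[of "q' s" "q s" "q' t"] triangle[of "q s" "q t" "q' t"] qs ps by auto
  show "\<bar>s - t\<bar> / K - (C + 2 * \<rho>) \<le> d (q' s) (q' t)"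
    using a1 Q ps commute[of "q t" "q' t"] by linarith
  show "d (q' s) (q' t) \<le> K * \<bar>s - t\<bar> + (C + 2 * \<rho>)"
    using a2 Q ps commute[of "q' s" "q s"] by linarith
qed

lemma continuous_on_dist_isometric:
  assumes "isometric_on M d g {a..b}" "x \<in> M"
  shows "continuous_on {a..b} (\<lambda>t. d x (g t))"
proof -
  have "1-lipschitz_on {a..b} (\<lambda>t. d x (g t))"
  proof (rule lipschitz_onI)
    fix s t assume s: "s \<in> {a..b}" and t: "t \<in> {a..b}"
    have m: "g s \<in> M" "g t \<in> M" using assms s t by (auto intro: isometric_on_mem)
    have "d x (g s) \<le> d x (g t) + d (g t) (g s)" "d x (g t) \<le> d x (g s) + d (g s) (g t)"
      using triangle m assms(2) by auto
    moreover have "d (g s) (g t) = \<bar>s - t\<bar>" "d (g t) (g s) = \<bar>s - t\<bar>"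
      using isometric_on_dist[OF assms(1)] s t by (auto simp: abs_minus_commute)
    ultimately show "dist (d x (g s)) (d x (g t)) \<le> 1 * dist s t"
      by (simp add: dist_real_def abs_le_iff)
  qed simp
  then show ?thesis by (rule lipschitz_on_continuous_on)
qed

lemma isometric_on_closest_point:
  assumes "isometric_on M d g {a..b}" "a \<le> b" "x \<in> M"
  shows "\<exists>\<sigma>\<in>{a..b}. \<forall>t\<in>{a..b}. d x (g \<sigma>) \<le> d x (g t)"
  using continuous_attains_inf[OF compact_Icc _ continuous_on_dist_isometric[OF assms(1,3)]] assms(2) by auto

lemma closest_point_near_start:
  assumes z: "isometric_on M d \<zeta> {0..\<sigma>}" and s0: "0 \<le> \<sigma>" and c: "c \<in> M" "d c (\<zeta> 0) < 1"
  obtains \<sigma>1 where "\<sigma>1 \<in> {0..\<sigma>}" "\<forall>t\<in>{0..\<sigma>}. d c (\<zeta> \<sigma>1) \<le> d c (\<zeta> t)" "d c (\<zeta> \<sigma>1) < 1" "\<sigma>1 < 2"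
proof -
  obtain \<sigma>1 where s1: "\<sigma>1 \<in> {0..\<sigma>}" "\<forall>t\<in>{0..\<sigma>}. d c (\<zeta> \<sigma>1) \<le> d c (\<zeta> t)"
    using isometric_on_closest_point[OF z s0 c(1)] by blast
  have A1: "d c (\<zeta> \<sigma>1) < 1" using s1 c s0 by force
  have "\<zeta> 0 \<in> M" "\<zeta> \<sigma>1 \<in> M" using isometric_on_mem[OF z] s1 s0 by auto
  then have "d (\<zeta> 0) (\<zeta> \<sigma>1) \<le> d (\<zeta> 0) c + d c (\<zeta> \<sigma>1)" using triangle c(1) by blast
  moreover have "d (\<zeta> 0) (\<zeta> \<sigma>1) = \<sigma>1" using isometric_on_dist[OF z, of 0 \<sigma>1] s1 s0 by auto
  ultimately have "\<sigma>1 < 2" using A1 c commute[of "\<zeta> 0" c] by linarith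
  then show thesis using that s1 A1 by blast
qed

lemma ray_closest_within:
  assumes g: "isometric_on M d g {0..}" and x: "x \<in> M" and U: "0 \<le> U"
    and H: "\<And>\<delta>. 0 < \<delta> \<Longrightarrow> \<exists>u. 0 \<le> u \<and> u \<le> U \<and> d x (g u) \<le> r + \<delta>"
  shows "\<exists>u\<ge>0. d x (g u) \<le> r"
proof -
  obtain u where u: "u \<in> {0..U}" "\<forall>t\<in>{0..U}. d x (g u) \<le> d x (g t)"
    using isometric_on_closest_point[OF isometric_on_subset[OF g] U x] by auto
  have "d x (g u) \<le> r + \<delta>" if "0 < \<delta>" for \<delta>
    using H[OF that] u by force
  then have "d x (g u) \<le> r" by (rule field_le_epsilon)
  then show ?thesis using u by auto
qed

text \<open>If p is, up to \<open>\<delta>\<close>, a closest point to x on a set containing z, and y lies on a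
  geodesic from x to p, then the detour from y to z through p costs at most a factor 3.\<close>
lemma closest_point_corner:
  assumes "x \<in> M" "y \<in> M" "p \<in> M" "z \<in> M"
    and "d x p \<le> d x z + \<delta>" and "d x y + d y p = d x p"
  shows "d y p + d p z \<le> 3 * d y z + 2 * \<delta>"
  using triangle[OF assms(1,2,4)] triangle[OF assms(3,2,4)] assms(5,6) commute[of p y] by argo

text \<open>The two outer legs of the path of the next lemma are far apart: either the first leg is
  short compared with \<open>Cc\<close>, or the middle leg is long compared with both outer legs.\<close>
lemma projection_path_far_pieces:
  assumes M: "y \<in> M" "y' \<in> M" "p1 \<in> M" "p2 \<in> M" "e \<in> M"
    and "d y p1 \<le> a" and "d p2 y' + d y' e = c" and "c \<le> d e p1"
    and "2*a \<le> Cc \<or> 2*(a + c) \<le> d p1 p2" and "0 \<le> Cc"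
  shows "(d y p1 + d p1 p2 + d p2 y')/3 - Cc \<le> d y y'" "d y y' \<le> d y p1 + d p1 p2 + d p2 y'"
proof -
  have "d p1 p2 \<le> d p1 y + d y y' + d y' p2" "d e p1 \<le> d e y' + d y' y + d y p1"
    using triangle4[OF M(3,1,2,4)] triangle4[OF M(5,2,1,3)] .
  moreover note commute[of p1 y] commute[of y' p2] commute[of y' y] commute[of e y']
    nonneg[of y p1] nonneg[of y' e] assms(6-)
  ultimately show "(d y p1 + d p1 p2 + d p2 y')/3 - Cc \<le> d y y'" by (elim disjE) argo+
  show "d y y' \<le> d y p1 + d p1 p2 + d p2 y'" using triangle4[OF M(1,3,4,2)] .
qed

text \<open>The projection path from \<open>c\<close> to its closest point \<open>\<zeta> \<sigma>1\<close>, along \<open>\<zeta>\<close>, and from the closest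
  point \<open>\<zeta> \<sigma>\<close> of \<open>e\<close> on to \<open>e\<close>.\<close>
lemma projection_path_quasigeodesic:
  fixes A1 C1 Cc :: real
  assumes g1: "isometric_on M d g1 {0..A1}" "g1 0 = c" "g1 A1 = \<zeta> \<sigma>1"
  and z: "isometric_on M d \<zeta> {\<sigma>1..\<sigma>}" "\<sigma>1 \<le> \<sigma>"
  and g3: "isometric_on M d g3 {0..C1}" "g3 0 = \<zeta> \<sigma>" "g3 C1 = e"
  and hc: "\<forall>t\<in>{\<sigma>1..\<sigma>}. A1 \<le> d c (\<zeta> t)"
  and he: "\<forall>t\<in>{\<sigma>1..\<sigma>}. C1 \<le> d e (\<zeta> t)"
  and nn: "0 \<le> A1" "0 \<le> C1" "0 \<le> Cc"
  and cond: "2*A1 \<le> Cc \<or> 2*(A1+C1) \<le> \<sigma> - \<sigma>1"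
  shows "quasigeodesic M d 3 Cc (\<lambda>t. if t \<le> A1 then g1 t else if t \<le> A1 + (\<sigma>-\<sigma>1) then \<zeta> (\<sigma>1 + (t - A1)) else g3 (t - A1 - (\<sigma>-\<sigma>1))) 0 (A1 + (\<sigma> - \<sigma>1) + C1)"
    (is "quasigeodesic M d 3 Cc ?q 0 ?T")
proof -
  define L1 where "L1 = \<sigma> - \<sigma>1"
  have L1: "0 \<le> L1" using z(2) L1_def by simp
  have ends: "0 \<in> {0..A1}" "A1 \<in> {0..A1}" "\<sigma>1 \<in> {\<sigma>1..\<sigma>}" "\<sigma> \<in> {\<sigma>1..\<sigma>}" "0 \<in> {0..C1}" "C1 \<in> {0..C1}"
    using nn z(2) by auto
  note G1 = isometric_on_segment[OF g1] and Z = isometric_on_segment[OF z(1) refl refl]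
    and G3 = isometric_on_segment[OF g3]
  have cM: "c \<in> M" "e \<in> M" using G1(1)[OF ends(1)] G3(1)[OF ends(6)] g1(2) g3(3) by auto
  have dc: "d c (\<zeta> \<sigma>1) = A1" and de: "d e (\<zeta> \<sigma>) = C1"
    using G1(2)[OF ends(2)] G3(3)[OF ends(5)] g1 g3 commute[of e] by auto
  have P12: "(A1 - s + (t - \<sigma>1))/3 \<le> d (g1 s) (\<zeta> t) \<and> d (g1 s) (\<zeta> t) \<le> A1 - s + (t - \<sigma>1)"
    if s: "s \<in> {0..A1}" and t: "t \<in> {\<sigma>1..\<sigma>}" for s t
  proof
    have "d (g1 s) (\<zeta> \<sigma>1) + d (\<zeta> \<sigma>1) (\<zeta> t) \<le> 3 * d (g1 s) (\<zeta> t) + 2 * 0"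
      by (rule closest_point_corner[of c]) (use cM G1[OF s] Z[OF ends(3)] Z[OF t] hc t dc in auto)
    then show "(A1 - s + (t - \<sigma>1))/3 \<le> d (g1 s) (\<zeta> t)" using G1[OF s] Z[OF t] by argo
    show "d (g1 s) (\<zeta> t) \<le> A1 - s + (t - \<sigma>1)"
      using triangle[of "g1 s" "\<zeta> \<sigma>1" "\<zeta> t"] G1[OF s] Z[OF ends(3)] Z[OF t] by simp
  qed
  have P23: "(\<sigma> - t + \<tau>)/3 \<le> d (\<zeta> t) (g3 \<tau>) \<and> d (\<zeta> t) (g3 \<tau>) \<le> \<sigma> - t + \<tau>"
    if t: "t \<in> {\<sigma>1..\<sigma>}" and u: "\<tau> \<in> {0..C1}" for t \<tau>
  proof
    have "d (g3 \<tau>) (\<zeta> \<sigma>) + d (\<zeta> \<sigma>) (\<zeta> t) \<le> 3 * d (g3 \<tau>) (\<zeta> t) + 2 * 0"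
      by (rule closest_point_corner[of e])
        (use cM G3[OF u] Z[OF ends(4)] Z[OF t] he t de commute[of e "g3 \<tau>"]
          commute[of "g3 \<tau>" "\<zeta> \<sigma>"] in auto)
    then show "(\<sigma> - t + \<tau>)/3 \<le> d (\<zeta> t) (g3 \<tau>)"
      using G3[OF u] Z[OF t] commute[of "g3 \<tau>" "\<zeta> \<sigma>"] commute[of "g3 \<tau>" "\<zeta> t"]
        commute[of "\<zeta> \<sigma>" "\<zeta> t"] by argo
    show "d (\<zeta> t) (g3 \<tau>) \<le> \<sigma> - t + \<tau>"
      using triangle[of "\<zeta> t" "\<zeta> \<sigma>" "g3 \<tau>"] G3[OF u] Z[OF ends(4)] Z[OF t] by simp
  qed
  have P13: "(A1 - s + L1 + \<tau>)/3 - Cc \<le> d (g1 s) (g3 \<tau>) \<and> d (g1 s) (g3 \<tau>) \<le> A1 - s + L1 + \<tau>"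
    if s: "s \<in> {0..A1}" and u: "\<tau> \<in> {0..C1}" for s \<tau>
  proof -
    have "d (g1 s) (\<zeta> \<sigma>1) = A1 - s" "d (\<zeta> \<sigma>1) (\<zeta> \<sigma>) = L1" "d (\<zeta> \<sigma>) (g3 \<tau>) = \<tau>"
      using G1[OF s] Z[OF ends(4)] G3[OF u] L1_def by auto
    moreover have "d (g1 s) (\<zeta> \<sigma>1) \<le> A1" "d (\<zeta> \<sigma>) (g3 \<tau>) + d (g3 \<tau>) e = C1" "C1 \<le> d e (\<zeta> \<sigma>1)"
      "2*A1 \<le> Cc \<or> 2*(A1 + C1) \<le> d (\<zeta> \<sigma>1) (\<zeta> \<sigma>)"
      using G1[OF s] G3[OF u] Z[OF ends(4)] he ends(3) cond s by auto
    note projection_path_far_pieces[OF G1(1)[OF s] G3(1)[OF u] Z(1)[OF ends(3)] Z(1)[OF ends(4)] cM(2)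
      this nn(3)]
    ultimately show ?thesis by simp
  qed
  show ?thesis
  proof (rule quasigeodesic_intro_ordered)
    show "0 \<le> ?T" using nn L1 L1_def by simp
    show "?q ` {0..?T} \<subseteq> M" using G1 Z G3 by (auto simp: L1_def)
    fix u v assume u: "u \<in> {0..?T}" and v: "v \<in> {0..?T}" and uv: "u \<le> v"
    consider (a) "v \<le> A1" | (b) "u \<le> A1" "A1 < v" "v \<le> A1 + L1" | (c) "u \<le> A1" "A1 + L1 < v"
      | (d) "A1 < u" "u \<le> A1 + L1" "v \<le> A1 + L1" | (e) "A1 < u" "u \<le> A1 + L1" "A1 + L1 < v"
      | (f) "A1 + L1 < u" using uv by linarith
    then show "(v - u)/3 - Cc \<le> d (?q u) (?q v) \<and> d (?q u) (?q v) \<le> 3*(v - u) + Cc"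
    proof cases
      case a
      then have "d (?q u) (?q v) = v - u" using isometric_on_dist[OF g1(1), of u v] u v uv by auto
      then show ?thesis using nn uv by argo
    next
      case b
      then have q: "?q u = g1 u" "?q v = \<zeta> (\<sigma>1 + (v - A1))"
        and "u \<in> {0..A1}" "\<sigma>1 + (v - A1) \<in> {\<sigma>1..\<sigma>}" using u v L1_def by auto
      from P12[OF this(3,4)] show ?thesis using nn uv unfolding q by argo
    next
      case c
      then have q: "?q u = g1 u" "?q v = g3 (v - A1 - L1)"
        and "u \<in> {0..A1}" "v - A1 - L1 \<in> {0..C1}" using u v L1 L1_def by auto
      from P13[OF this(3,4)] show ?thesis using nn uv unfolding q L1_def by argo
    next
      case d
      then have "d (?q u) (?q v) = v - u"
        using isometric_on_dist[OF z(1), of "\<sigma>1 + (u - A1)" "\<sigma>1 + (v - A1)"] u v uv L1_def by auto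
      then show ?thesis using nn uv by argo
    next
      case e
      then have q: "?q u = \<zeta> (\<sigma>1 + (u - A1))" "?q v = g3 (v - A1 - L1)"
        and "\<sigma>1 + (u - A1) \<in> {\<sigma>1..\<sigma>}" "v - A1 - L1 \<in> {0..C1}" using u v L1 L1_def by auto
      from P23[OF this(3,4)] show ?thesis using nn uv unfolding q L1_def by argo
    next
      case f
      then have "d (?q u) (?q v) = v - u"
        using isometric_on_dist[OF g3(1), of "u - A1 - L1" "v - A1 - L1"] u v uv L1_def nn L1 by auto
      then show ?thesis using nn uv by argo
    qed
  qed
qed

lemma quasigeodesic_append_geodesic:
  assumes q: "quasigeodesic M d K C q a b" and K: "1 \<le> K" "0 \<le> C"
  and \<tau>: "\<tau> \<in> {a..b}" "\<forall>s\<in>{a..b}. d z (q \<tau>) \<le> d z (q s) + 1"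
  and g: "isometric_on M d g {0..ll}" "g 0 = q \<tau>" "g ll = z" "ll = d (q \<tau>) z"
  shows "quasigeodesic M d (3*K) (C+1) (\<lambda>t. if t \<le> \<tau> then q t else g (t - \<tau>)) a (\<tau> + ll)"
    (is "quasigeodesic M d _ _ ?p _ _")
proof -
  have l0: "0 \<le> ll" using g by simp
  have zM: "z \<in> M" using g l0 isometric_on_mem[OF g(1), of ll] by auto
  have qM: "q s \<in> M" if "s \<in> {a..b}" for s using q that by (rule quasigeodesic_mem)
  have Q: "\<bar>s - t\<bar> / K - C \<le> d (q s) (q t) \<and> d (q s) (q t) \<le> K * \<bar>s - t\<bar> + C" if "s \<in> {a..b}" "t \<in> {a..b}" for s t
    using q that unfolding quasigeodesic_def by auto
  have gM: "g y \<in> M" "d (q \<tau>) (g y) = y" "d (g y) z = ll - y" if "y \<in> {0..ll}" for y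
    using isometric_on_mem[OF g(1) that] isometric_on_dist[OF g(1), of 0 y] isometric_on_dist[OF g(1), of y ll] that g by auto
  have divK: "x / (3*K) \<le> x / K" "x / (3*K) = (x/K)/3" if "0 \<le> x" for x
    using K that by (auto simp: field_simps)
  have key: "(t - s) / (3*K) - (C+1) \<le> d (?p s) (?p t) \<and> d (?p s) (?p t) \<le> 3*K*(t - s) + (C+1)"
    if s: "s \<in> {a..\<tau>+ll}" and t: "t \<in> {a..\<tau>+ll}" and st: "s \<le> t" for s t
  proof (cases "t \<le> \<tau>")
    case True
    then have e: "?p s = q s" "?p t = q t" using st by auto
    have st': "s \<in> {a..b}" "t \<in> {a..b}" using s t True \<tau> st by auto
    have "\<bar>s - t\<bar> = t - s" using st by auto
    moreover have "(t - s) / (3*K) \<le> (t-s)/K" using divK(1)[of "t-s"] st by simp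
    moreover have "K*(t - s) \<le> 3*K*(t-s)" using K st by (simp add: mult_right_mono)
    moreover have "(t-s)/K - C \<le> d (q s) (q t) \<and> d (q s) (q t) \<le> K*(t-s) + C"
      using Q[OF st'] \<open>\<bar>s - t\<bar> = t - s\<close> by simp
    ultimately show ?thesis unfolding e by argo
  next
    case False
    then have tt: "t - \<tau> \<in> {0..ll}" using t by auto
    show ?thesis
    proof (cases "s \<le> \<tau>")
      case True
      then have e: "?p s = q s" "?p t = g (t - \<tau>)" using False by auto
      have sI: "s \<in> {a..b}" using s True \<tau> by auto
      define y where "y = t - \<tau>"
      have y: "0 \<le> y" "t - s = (\<tau> - s) + y" "0 \<le> \<tau> - s" using False True y_def by auto
      have g1: "g y \<in> M" "d (q \<tau>) (g y) = y" "d (g y) z = ll - y" using gM tt y_def by auto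
      have qt: "q \<tau> \<in> M" "q s \<in> M" using qM \<tau> sI by auto
      have "d z (q \<tau>) \<le> d z (q s) + 1" using \<tau>(2) sI by blast
      moreover have "d z (g y) + d (g y) (q \<tau>) = d z (q \<tau>)"
        using g1 g(4) commute[of z "g y"] commute[of z "q \<tau>"] commute[of "g y" "q \<tau>"] by linarith
      ultimately have "d (g y) (q \<tau>) + d (q \<tau>) (q s) \<le> 3 * d (g y) (q s) + 2 * 1"
        by (rule closest_point_corner[OF zM g1(1) qt])
      moreover have "(\<tau> - s) / K - C \<le> d (q s) (q \<tau>)" "d (q s) (q \<tau>) \<le> K * (\<tau> - s) + C"
        using Q[OF sI \<tau>(1)] True by auto
      moreover have "(t - s) / (3*K) \<le> ((\<tau> - s) / K)/3 + y/3"
      proof -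
        have "(t - s) / (3*K) = ((\<tau> - s) / K)/3 + y/(3*K)"
          using y K by (simp add: field_simps)
        moreover have "y/(3*K) \<le> y/3" using K y by (intro frac_le) auto
        ultimately show ?thesis by linarith
      qed
      moreover have "K*(\<tau> - s) + C + y \<le> 3*K*(t-s) + (C+1)"
      proof -
        have "K*(\<tau> - s) \<le> 3*K*(\<tau> - s)" using K y(3) by (auto simp: mult_right_mono)
        moreover have "1*y \<le> (3*K)*y" using K y(1) by (intro mult_right_mono) auto
        ultimately show ?thesis using y(2) by (simp add: algebra_simps)
      qed
      moreover have "d (q s) (g y) \<le> d (q s) (q \<tau>) + d (q \<tau>) (g y)" using triangle[OF qt(2,1) g1(1)] .
      ultimately show ?thesis
        using g1 K commute[of "g y" "q s"] commute[of "q \<tau>" "q s"] commute[of "g y" "q \<tau>"]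
        unfolding e unfolding y_def[symmetric] by argo
    next
      case False2: False
      then have e: "?p s = g (s - \<tau>)" "?p t = g (t - \<tau>)" using False by auto
      have ss: "s - \<tau> \<in> {0..ll}" using s False2 by auto
      have "d (g (s - \<tau>)) (g (t - \<tau>)) = t - s" using isometric_on_dist[OF g(1) ss tt] st by auto
      moreover have "(t - s) / (3*K) \<le> (t-s)/K" using divK(1)[of "t-s"] st by simp
      moreover have "(t-s)/K \<le> t - s" using st K by (simp add: divide_le_eq mult_le_cancel_left1 mult_right_mono)
      moreover have "1*(t - s) \<le> (3*K)*(t-s)" using K st by (intro mult_right_mono) auto
      ultimately show ?thesis unfolding e using K by argo
    qed
  qed
  show ?thesis
  proof (rule quasigeodesic_intro_ordered)
    show "a \<le> \<tau> + ll" using \<tau> l0 by auto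
    show "?p ` {a..\<tau> + ll} \<subseteq> M" using qM gM \<tau> by auto
  qed (fact key)
qed

section \<open>Morse geodesics\<close>

lemma morseD:
  assumes "morse M d N \<gamma> I" "1 \<le> K" "0 \<le> C" "quasigeodesic M d K C q a b"
    "q a \<in> \<gamma> ` I" "q b \<in> \<gamma> ` I" "s \<in> {a..b}"
  shows "\<exists>t\<in>I. d (q s) (\<gamma> t) \<le> N K C"
  using assms unfolding morse_def nbhd_def by blast

lemma morse_near_ends:
  assumes m: "morse M d N \<alpha> I" and K: "1 \<le> K" "0 \<le> C"
    and q: "quasigeodesic M d K C q a b"
    and u: "u1 \<in> I" "u2 \<in> I" "d (q a) (\<alpha> u1) \<le> \<rho>" "d (q b) (\<alpha> u2) \<le> \<rho>"
    and aI: "\<alpha> ` I \<subseteq> M"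
    and s: "s \<in> {a..b}"
  shows "\<exists>t\<in>I. d (q s) (\<alpha> t) \<le> N K (C + 2*\<rho>) + \<rho>"
proof -
  have r0: "0 \<le> \<rho>" using u(3) nonneg[of "q a" "\<alpha> u1"] by linarith
  define q' where "q' = (\<lambda>t. if t = a then \<alpha> u1 else if t = b then \<alpha> u2 else q t)"
  have p: "\<forall>s\<in>{a..b}. q' s \<in> M \<and> d (q s) (q' s) \<le> \<rho>"
  proof
    fix t assume t: "t \<in> {a..b}"
    have "q t \<in> M" using q t by (rule quasigeodesic_mem)
    then show "q' t \<in> M \<and> d (q t) (q' t) \<le> \<rho>"
      using u aI r0 unfolding q'_def by auto
  qed
  have q'q: "quasigeodesic M d K (C + 2*\<rho>) q' a b" by (rule quasigeodesic_perturb[OF q p])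
  have ea: "q' a \<in> \<alpha> ` I" "q' b \<in> \<alpha> ` I" using u unfolding q'_def by auto
  obtain t where t: "t \<in> I" "d (q' s) (\<alpha> t) \<le> N K (C + 2*\<rho>)"
    using morseD[OF m K(1) _ q'q ea s] K r0 by auto
  have "q s \<in> M" "q' s \<in> M" "\<alpha> t \<in> M" using q s p aI t by (auto intro: quasigeodesic_mem)
  then have "d (q s) (\<alpha> t) \<le> d (q s) (q' s) + d (q' s) (\<alpha> t)" by (rule triangle)
  then show ?thesis using t p s by force
qed

lemma projection_path_near_morse:
  assumes G: "geodesic_mspace M d"
  and m: "morse M d N \<alpha> I" and aI: "\<alpha> ` I \<subseteq> M"
  and cI: "c \<in> \<alpha> ` I" and eI: "e \<in> \<alpha> ` I"
  and z: "isometric_on M d \<zeta> {\<sigma>1..\<sigma>}" "\<sigma>1 \<le> \<sigma>"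
  and hc: "\<forall>t\<in>{\<sigma>1..\<sigma>}. d c (\<zeta> \<sigma>1) \<le> d c (\<zeta> t)"
  and he: "\<forall>t\<in>{\<sigma>1..\<sigma>}. d e (\<zeta> \<sigma>) \<le> d e (\<zeta> t)"
  and Cc: "0 \<le> Cc"
  and cond: "2 * d c (\<zeta> \<sigma>1) \<le> Cc \<or> 2 * (d c (\<zeta> \<sigma>1) + d e (\<zeta> \<sigma>)) \<le> \<sigma> - \<sigma>1"
  and t: "t \<in> {\<sigma>1..\<sigma>}"
  shows "\<exists>u\<in>I. d (\<zeta> t) (\<alpha> u) \<le> N 3 Cc"
proof -
  have cM: "c \<in> M" "e \<in> M" using cI eI aI by auto
  have zM: "\<zeta> \<sigma>1 \<in> M" "\<zeta> \<sigma> \<in> M" using z isometric_on_mem by auto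
  obtain g1 where g1: "isometric_on M d g1 {0..d c (\<zeta> \<sigma>1)}" "g1 0 = c" "g1 (d c (\<zeta> \<sigma>1)) = \<zeta> \<sigma>1"
    using geodesic_segment_exists[OF G cM(1) zM(1)] .
  obtain g3 where g3: "isometric_on M d g3 {0..d (\<zeta> \<sigma>) e}" "g3 0 = \<zeta> \<sigma>" "g3 (d (\<zeta> \<sigma>) e) = e"
    using geodesic_segment_exists[OF G zM(2) cM(2)] .
  define A1 where "A1 = d c (\<zeta> \<sigma>1)"
  define C1 where "C1 = d (\<zeta> \<sigma>) e"
  have he': "\<forall>t\<in>{\<sigma>1..\<sigma>}. C1 \<le> d e (\<zeta> t)" using he commute C1_def by metis
  have cond': "2*A1 \<le> Cc \<or> 2*(A1+C1) \<le> \<sigma> - \<sigma>1" using cond commute A1_def C1_def by metis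
  let ?q = "\<lambda>t. if t \<le> A1 then g1 t else if t \<le> A1 + (\<sigma>-\<sigma>1) then \<zeta> (\<sigma>1 + (t - A1)) else g3 (t - A1 - (\<sigma>-\<sigma>1))"
  have Q: "quasigeodesic M d 3 Cc ?q 0 (A1 + (\<sigma> - \<sigma>1) + C1)"
    by (rule projection_path_quasigeodesic[OF g1[folded A1_def] z g3[folded C1_def]])
       (use hc he' cond' Cc A1_def C1_def in auto)
  have A1: "0 \<le> A1" "0 \<le> C1" using A1_def C1_def by auto
  have q0: "?q 0 = c" using g1 A1 by auto
  have qT: "?q (A1 + (\<sigma> - \<sigma>1) + C1) = e"
  proof (cases "C1 = 0")
    case False
    then have "0 < C1" using A1 by auto
    then have "\<not> (A1 + (\<sigma> - \<sigma>1) + C1 \<le> A1)" "\<not> (A1 + (\<sigma> - \<sigma>1) + C1 \<le> A1 + (\<sigma> - \<sigma>1))"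
      using z(2) by auto
    then show ?thesis using g3(3) C1_def by simp
  next
    case True
    show ?thesis
    proof (cases "\<sigma>1 = \<sigma>")
      case True
      then show ?thesis using \<open>C1 = 0\<close> g1 g3 A1_def C1_def by auto
    next
      case False
      then show ?thesis using \<open>C1 = 0\<close> z(2) g3 A1_def C1_def by auto
    qed
  qed
  have qt: "?q (A1 + (t - \<sigma>1)) = \<zeta> t"
    using t g1 A1_def by auto
  have tT: "A1 + (t - \<sigma>1) \<in> {0..A1 + (\<sigma> - \<sigma>1) + C1}" using t A1 by auto
  show ?thesis using morseD[OF m _ Cc Q _ _ tT] q0 qT cI eI qt by auto
qed

text \<open>Project \<open>\<alpha> n\<close> to a closest point of \<open>\<zeta>\<close>, which lies at parameter below 2; the projection
  path is then a (3,0)-quasigeodesic once \<open>\<zeta>\<close> is long compared with its distance to \<open>e\<close>.\<close>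
lemma closest_segment_near_morse:
  assumes G: "geodesic_mspace M d"
    and m: "morse M d N \<alpha> {0..A}" "isometric_on M d \<alpha> {0..A}" "\<alpha> 0 = e"
    and nA: "0 \<le> n" "n \<le> A" and c: "d (\<alpha> n) (\<zeta> 0) < 1"
    and z: "isometric_on M d \<zeta> {0..\<sigma>}" and cl: "\<forall>t\<in>{0..\<sigma>}. d e (\<zeta> \<sigma>) \<le> d e (\<zeta> t)"
    and R: "d e (\<zeta> \<sigma>) \<le> R0" and \<sigma>n: "n - R0 \<le> \<sigma>" and nbig: "3*R0 + 4 \<le> n"
    and t: "t \<in> {2..\<sigma>}"
  shows "\<exists>u\<in>{0..A}. d (\<zeta> t) (\<alpha> u) \<le> N 3 0"
proof -
  have aM: "\<alpha> ` {0..A} \<subseteq> M" using m unfolding isometric_on_def by auto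
  have I: "\<alpha> n \<in> \<alpha> ` {0..A}" "e \<in> \<alpha> ` {0..A}" using m nA by (auto intro!: image_eqI)
  have "\<alpha> n \<in> M" "0 \<le> \<sigma>" using I aM t by auto
  then obtain \<sigma>1 where s1: "\<sigma>1 \<in> {0..\<sigma>}" "\<forall>t\<in>{0..\<sigma>}. d (\<alpha> n) (\<zeta> \<sigma>1) \<le> d (\<alpha> n) (\<zeta> t)"
      "d (\<alpha> n) (\<zeta> \<sigma>1) < 1" "\<sigma>1 < 2"
    using closest_point_near_start[OF z _ _ c] by metis
  have "0 \<le> R0" using R nonneg[of e "\<zeta> \<sigma>"] by linarith
  then have "2 * (d (\<alpha> n) (\<zeta> \<sigma>1) + d e (\<zeta> \<sigma>)) \<le> \<sigma> - \<sigma>1"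
    using s1(3,4) R \<sigma>n nbig by argo
  then show ?thesis
    by (intro projection_path_near_morse[OF G m(1) aM I isometric_on_subset[OF z, of "{\<sigma>1..\<sigma>}"]])
      (use s1 cl t in auto)
qed

lemma closest_point_near_morse:
  assumes G: "geodesic_mspace M d"
    and m: "morse M d N \<alpha> {0..A}" "isometric_on M d \<alpha> {0..A}" "\<alpha> 0 = e"
    and nA: "0 \<le> n" "n \<le> A" and c: "d (\<alpha> n) (\<zeta> 0) < 1"
    and z: "isometric_on M d \<zeta> {0..\<sigma>}" and s0: "0 \<le> \<sigma>" and cl: "\<forall>t\<in>{0..\<sigma>}. d e (\<zeta> \<sigma>) \<le> d e (\<zeta> t)"
  shows "\<exists>u\<in>{0..A}. d (\<zeta> \<sigma>) (\<alpha> u) \<le> N 3 2"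
proof -
  have aM: "\<alpha> ` {0..A} \<subseteq> M" using m unfolding isometric_on_def by auto
  have I: "\<alpha> n \<in> \<alpha> ` {0..A}" "e \<in> \<alpha> ` {0..A}" using m nA by (auto intro!: image_eqI)
  have "\<alpha> n \<in> M" using I aM by auto
  then obtain \<sigma>1 where s1: "\<sigma>1 \<in> {0..\<sigma>}" "\<forall>t\<in>{0..\<sigma>}. d (\<alpha> n) (\<zeta> \<sigma>1) \<le> d (\<alpha> n) (\<zeta> t)"
      "d (\<alpha> n) (\<zeta> \<sigma>1) < 1"
    using closest_point_near_start[OF z s0 _ c] by metis
  show ?thesis
    by (intro projection_path_near_morse[OF G m(1) aM I isometric_on_subset[OF z, of "{\<sigma>1..\<sigma>}"]])
      (use s1 cl in auto)
qed

lemma morse_fellow_travel: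
  assumes m: "morse M d N \<alpha> {0..A}" and ai: "isometric_on M d \<alpha> {0..A}" and a0: "\<alpha> 0 = e"
    and bi: "isometric_on M d \<beta> {0..B}" and b0: "\<beta> 0 = e"
    and T: "T \<in> {0..B}" and u: "u \<in> {0..A}" "d (\<beta> T) (\<alpha> u) \<le> \<rho>"
    and t: "t \<in> {0..T}"
  shows "\<exists>v\<in>{0..A}. d (\<beta> t) (\<alpha> v) \<le> N 1 (2*\<rho>) + \<rho> \<and> \<bar>t - v\<bar> \<le> N 1 (2*\<rho>) + \<rho>"
proof -
  have \<rho>: "0 \<le> \<rho>" using u(2) nonneg[of "\<beta> T" "\<alpha> u"] by linarith
  have A0: "0 \<in> {0..A}" using u by auto
  have q: "quasigeodesic M d 1 0 \<beta> 0 T" using isometric_on_quasigeodesic[OF isometric_on_subset[OF bi] ] T by auto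
  have aM: "\<alpha> ` {0..A} \<subseteq> M" using ai unfolding isometric_on_def by auto
  have eM: "e \<in> M" using a0 aM A0 by auto
  have q0: "d (\<beta> 0) (\<alpha> 0) \<le> \<rho>" using a0 b0 eM \<rho> by simp
  obtain v where v: "v \<in> {0..A}" "d (\<beta> t) (\<alpha> v) \<le> N 1 (0 + 2*\<rho>) + \<rho>"
    using morse_near_ends[OF m _ _ q A0 u(1) q0 u(2) aM t] by auto
  have tB: "t \<in> {0..B}" using t T by auto
  have bt: "\<beta> t \<in> M" "d e (\<beta> t) = t" using isometric_on_mem[OF bi tB] isometric_on_dist[OF bi, of 0 t] tB b0 by auto
  have av: "\<alpha> v \<in> M" "d e (\<alpha> v) = v" using isometric_on_mem[OF ai v(1)] isometric_on_dist[OF ai, of 0 v] v(1) A0 a0 by auto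
  have "d e (\<beta> t) \<le> d e (\<alpha> v) + d (\<alpha> v) (\<beta> t)" "d e (\<alpha> v) \<le> d e (\<beta> t) + d (\<beta> t) (\<alpha> v)"
    using triangle[OF eM av(1) bt(1)] triangle[OF eM bt(1) av(1)] .
  then show ?thesis using v bt av commute[of "\<alpha> v" "\<beta> t"] by (intro bexI[of _ v]) auto
qed

lemma morse_shadow:
  assumes m: "morse M d N \<alpha> {0..A}" and ai: "isometric_on M d \<alpha> {0..A}"
    and q: "quasigeodesic M d K C q a b" and K: "1 \<le> K" "0 \<le> C"
    and u: "u1 \<in> {0..A}" "u2 \<in> {0..A}" "d (q a) (\<alpha> u1) \<le> \<rho>" "d (q b) (\<alpha> u2) \<le> \<rho>"
  obtains f where "\<forall>t\<in>{a..b}. f t \<in> {0..A} \<and> d (q t) (\<alpha> (f t)) \<le> N K (C + 2*\<rho>) + \<rho>"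
    and "\<forall>t\<in>{a..b}. \<forall>t'\<in>{a..b}. \<bar>f t - f t'\<bar> \<le> K*\<bar>t - t'\<bar> + (C + 2*(N K (C + 2*\<rho>) + \<rho>))"
    and "\<forall>t\<in>{a..b}. \<forall>t'\<in>{a..b}. \<bar>t - t'\<bar> \<le> K*(\<bar>f t - f t'\<bar> + (C + 2*(N K (C + 2*\<rho>) + \<rho>)))"
proof -
  define m where "m = N K (C + 2*\<rho>) + \<rho>"
  have aM: "\<alpha> ` {0..A} \<subseteq> M" using ai unfolding isometric_on_def by auto
  have "\<exists>v\<in>{0..A}. d (q t) (\<alpha> v) \<le> m" if "t \<in> {a..b}" for t
    using morse_near_ends[OF m K q u aM that] unfolding m_def by auto
  then obtain f where fP: "\<forall>t\<in>{a..b}. f t \<in> {0..A} \<and> d (q t) (\<alpha> (f t)) \<le> m" by metis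
  have bounds: "\<bar>f t - f t'\<bar> \<le> K*\<bar>t - t'\<bar> + (C + 2*m) \<and> \<bar>t - t'\<bar> / K \<le> \<bar>f t - f t'\<bar> + (C + 2*m)"
    if t: "t \<in> {a..b}" "t' \<in> {a..b}" for t t'
  proof -
    have f1: "f t \<in> {0..A}" "f t' \<in> {0..A}" "d (q t) (\<alpha> (f t)) \<le> m" "d (q t') (\<alpha> (f t')) \<le> m"
      using fP t by auto
    have M4: "q t \<in> M" "q t' \<in> M" "\<alpha> (f t) \<in> M" "\<alpha> (f t') \<in> M"
      using quasigeodesic_mem[OF q] t f1 aM by auto
    have "d (\<alpha> (f t)) (\<alpha> (f t')) = \<bar>f t - f t'\<bar>" using isometric_on_dist[OF ai f1(1,2)] .
    moreover have "\<bar>t - t'\<bar> / K - C \<le> d (q t) (q t')" "d (q t) (q t') \<le> K * \<bar>t - t'\<bar> + C"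
      using q t unfolding quasigeodesic_def by auto
    moreover have "d (\<alpha> (f t)) (\<alpha> (f t')) \<le> d (\<alpha> (f t)) (q t) + d (q t) (q t') + d (q t') (\<alpha> (f t'))"
      "d (q t) (q t') \<le> d (q t) (\<alpha> (f t)) + d (\<alpha> (f t)) (\<alpha> (f t')) + d (\<alpha> (f t')) (q t')"
      using triangle[OF M4(3,1,4)] triangle[OF M4(1,2,4)] triangle[OF M4(1,3,2)] triangle[OF M4(3,4,2)]
      by linarith+
    ultimately show ?thesis
      using f1 commute[of "\<alpha> (f t)" "q t"] commute[of "\<alpha> (f t')" "q t'"] by argo
  qed
  show thesis
  proof (rule that[of f])
    show "\<forall>t\<in>{a..b}. \<forall>t'\<in>{a..b}. \<bar>t - t'\<bar> \<le> K*(\<bar>f t - f t'\<bar> + (C + 2*(N K (C + 2*\<rho>) + \<rho>)))"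
    proof (intro ballI)
      fix t t' assume "t \<in> {a..b}" "t' \<in> {a..b}"
      then have "K * (\<bar>t - t'\<bar> / K) \<le> K * (\<bar>f t - f t'\<bar> + (C + 2*m))"
        using bounds K by (intro mult_left_mono) auto
      then show "\<bar>t - t'\<bar> \<le> K*(\<bar>f t - f t'\<bar> + (C + 2*(N K (C + 2*\<rho>) + \<rho>)))"
        using K unfolding m_def by simp
    qed
  qed (use fP bounds in \<open>auto simp: m_def\<close>)
qed

lemma geodesic_near_morse_between:
  assumes mg: "morse_gauge N" and m: "morse M d N \<alpha> {0..A}" and ai: "isometric_on M d \<alpha> {0..A}"
    and g: "isometric_on M d \<gamma> UNIV" and lh: "lo \<le> hi" and \<rho>: "0 \<le> \<rho>"
    and u: "ul \<in> {0..A}" "uh \<in> {0..A}" "d (\<gamma> lo) (\<alpha> ul) \<le> \<rho>" "d (\<gamma> hi) (\<alpha> uh) \<le> \<rho>"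
    and w: "min ul uh \<le> w" "w \<le> max ul uh"
  shows "\<exists>t\<in>{lo..hi}. d (\<alpha> w) (\<gamma> t) \<le> cover_radius N \<rho>"
proof -
  define m1 where "m1 = N 1 (2*\<rho>) + \<rho>"
  have m1: "0 \<le> m1" using mg \<rho> unfolding m1_def morse_gauge_def by auto
  have gq: "quasigeodesic M d 1 0 \<gamma> lo hi"
    using isometric_on_quasigeodesic[OF isometric_on_subset[OF g] lh] by auto
  obtain g where gP: "\<forall>t\<in>{lo..hi}. g t \<in> {0..A} \<and> d (\<gamma> t) (\<alpha> (g t)) \<le> m1"
    and Lg: "\<forall>s\<in>{lo..hi}. \<forall>s'\<in>{lo..hi}. \<bar>g s - g s'\<bar> \<le> 1*\<bar>s - s'\<bar> + (0 + 2*m1)"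
  proof (rule morse_shadow[OF m ai gq _ _ u])
    fix f assume "\<forall>t\<in>{lo..hi}. f t \<in> {0..A} \<and> d (\<gamma> t) (\<alpha> (f t)) \<le> N 1 (0 + 2*\<rho>) + \<rho>"
      "\<forall>s\<in>{lo..hi}. \<forall>s'\<in>{lo..hi}. \<bar>f s - f s'\<bar> \<le> 1*\<bar>s - s'\<bar> + (0 + 2*(N 1 (0 + 2*\<rho>) + \<rho>))"
    then show thesis using that[of f] unfolding m1_def by simp
  qed simp_all
  have gM: "\<gamma> t \<in> M" for t using g isometric_on_mem by blast
  have aM: "\<alpha> v \<in> M" if "v \<in> {0..A}" for v using ai that by (rule isometric_on_mem)
  have wA: "w \<in> {0..A}" using u w by auto
  have R: "cover_radius N \<rho> = 3*m1 + 2*\<rho> + 1" unfolding cover_radius_def m1_def by simp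
  have near: "\<exists>t\<in>{lo..hi}. d (\<alpha> w) (\<gamma> t) \<le> cover_radius N \<rho>"
    if t: "t \<in> {lo..hi}" and v: "v \<in> {0..A}" "\<bar>w - v\<bar> + d (\<gamma> t) (\<alpha> v) \<le> cover_radius N \<rho>" for t v
  proof
    have "d (\<alpha> w) (\<gamma> t) \<le> d (\<alpha> w) (\<alpha> v) + d (\<alpha> v) (\<gamma> t)"
      using triangle[OF aM[OF wA] aM[OF v(1)] gM] .
    then show "d (\<alpha> w) (\<gamma> t) \<le> cover_radius N \<rho>"
      using isometric_on_dist[OF ai wA v(1)] commute[of "\<alpha> v" "\<gamma> t"] v by linarith
  qed (fact t)
  have shadow_end: "\<bar>g t - v\<bar> \<le> m1 + \<rho>" if "t \<in> {lo..hi}" "v \<in> {0..A}" "d (\<gamma> t) (\<alpha> v) \<le> \<rho>" for t v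
  proof -
    have gt: "g t \<in> {0..A}" "d (\<gamma> t) (\<alpha> (g t)) \<le> m1" using gP that by auto
    have "d (\<alpha> (g t)) (\<alpha> v) \<le> d (\<alpha> (g t)) (\<gamma> t) + d (\<gamma> t) (\<alpha> v)"
      using triangle[OF aM[OF gt(1)] gM aM[OF that(2)]] .
    then show ?thesis
      using gt that isometric_on_dist[OF ai gt(1) that(2)] commute[of "\<alpha> (g t)" "\<gamma> t"] by linarith
  qed
  have lohi: "lo \<in> {lo..hi}" "hi \<in> {lo..hi}" using lh by auto
  have "\<bar>g lo - ul\<bar> \<le> m1 + \<rho>" "\<bar>g hi - uh\<bar> \<le> m1 + \<rho>"
    using shadow_end[OF lohi(1) u(1,3)] shadow_end[OF lohi(2) u(2,4)] .
  then have "(min (g lo) (g hi) \<le> w \<and> w \<le> max (g lo) (g hi))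
      \<or> \<bar>w - ul\<bar> \<le> m1 + \<rho> \<or> \<bar>w - uh\<bar> \<le> m1 + \<rho>"
    using w by (auto simp: min_def max_def abs_if split: if_splits)
  then consider "min (g lo) (g hi) \<le> w \<and> w \<le> max (g lo) (g hi)"
    | "\<bar>w - ul\<bar> \<le> m1 + \<rho>" | "\<bar>w - uh\<bar> \<le> m1 + \<rho>" by blast
  then show ?thesis
  proof cases
    case 1
    then consider "g lo \<le> w" "w \<le> g hi" | "g hi \<le> w" "w \<le> g lo" by linarith
    then obtain t where t: "t \<in> {lo..hi}" "\<bar>g t - w\<bar> \<le> 0 + 2*m1 + 1"
      by cases (blast dest: coarse_ivt[OF lh Lg zero_le_one] coarse_ivt_decreasing[OF lh Lg zero_le_one])+
    moreover have "g t \<in> {0..A}" "d (\<gamma> t) (\<alpha> (g t)) \<le> m1" using gP t(1) by auto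
    moreover have "\<bar>w - g t\<bar> = \<bar>g t - w\<bar>" by (rule abs_minus_commute)
    ultimately show ?thesis using near[of t "g t"] \<rho> R by linarith
  next
    case 2 then show ?thesis using near[OF lohi(1) u(1)] u(3) m1 \<rho> R by simp
  next
    case 3 then show ?thesis using near[OF lohi(2) u(2)] u(4) m1 \<rho> R by simp
  qed
qed

lemma quasigeodesic_near_geodesic:
  assumes mg: "morse_gauge N" and m: "morse M d N \<alpha> {0..A}" and ai: "isometric_on M d \<alpha> {0..A}"
    and g: "isometric_on M d \<gamma> UNIV" and \<rho>: "0 \<le> \<rho>"
    and q: "quasigeodesic M d K C q a b" and K: "1 \<le> K" "0 \<le> C"
    and qa: "q a = \<gamma> s1" and qb: "q b = \<gamma> s2"
    and u: "u1 \<in> {0..A}" "u2 \<in> {0..A}" "d (\<gamma> s1) (\<alpha> u1) \<le> \<rho>" "d (\<gamma> s2) (\<alpha> u2) \<le> \<rho>"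
    and s: "s \<in> {a..b}"
  shows "\<exists>t. d (q s) (\<gamma> t) \<le> quasi_radius N K C \<rho>"
proof -
  define m where "m = N K (C + 2*\<rho>) + \<rho>"
  define J where "J = C + 2*m"
  define B0 where "B0 = K*K*(3*J+2) + 4*J + 3"
  have m0: "0 \<le> m" using mg \<rho> K unfolding m_def morse_gauge_def by auto
  have J0: "0 \<le> J" using m0 K unfolding J_def by auto
  have B00: "0 \<le> B0" using J0 K unfolding B0_def by (simp add: add_nonneg_nonneg)
  have Rc: "0 \<le> cover_radius N \<rho>"
    using mg \<rho> unfolding cover_radius_def morse_gauge_def by (smt (verit) one_le_numeral)
  have R: "quasi_radius N K C \<rho> = m + cover_radius N \<rho> + (2*m + B0 + 2*\<rho>)"
    unfolding quasi_radius_def m_def B0_def J_def by simp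
  have ab: "a \<le> b" using q unfolding quasigeodesic_def by auto
  obtain f where fP: "\<forall>t\<in>{a..b}. f t \<in> {0..A} \<and> d (q t) (\<alpha> (f t)) \<le> m"
    and Lf: "\<forall>t\<in>{a..b}. \<forall>t'\<in>{a..b}. \<bar>f t - f t'\<bar> \<le> K*\<bar>t - t'\<bar> + J"
    and Ef: "\<forall>t\<in>{a..b}. \<forall>t'\<in>{a..b}. \<bar>t - t'\<bar> \<le> K*(\<bar>f t - f t'\<bar> + J)"
  proof (rule morse_shadow[OF m ai q K u(1,2)])
    show "d (q a) (\<alpha> u1) \<le> \<rho>" "d (q b) (\<alpha> u2) \<le> \<rho>" using u(3,4) qa qb by simp_all
  qed (auto simp: J_def m_def intro: that)
  have qM: "q t \<in> M" if "t \<in> {a..b}" for t using q that by (rule quasigeodesic_mem)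
  have gM: "\<gamma> t \<in> M" for t using g isometric_on_mem by blast
  have aM: "\<alpha> v \<in> M" if "v \<in> {0..A}" for v using ai that by (rule isometric_on_mem)
  have ad: "d (\<alpha> v) (\<alpha> v') = \<bar>v - v'\<bar>" if "v \<in> {0..A}" "v' \<in> {0..A}" for v v'
    using isometric_on_dist[OF ai that] .
  have low: "min (f a) (f b) - B0 \<le> f s"
    unfolding B0_def by (rule coarse_embedding_lower_bound[OF ab K(1) J0 Lf Ef s])
  have up: "f s \<le> max (f a) (f b) + B0"
    unfolding B0_def by (rule coarse_embedding_upper_bound[OF ab K(1) J0 Lf Ef s])
  have Fend: "\<bar>f t - uu\<bar> \<le> m + \<rho>" if "t \<in> {a..b}" "uu \<in> {0..A}" "d (q t) (\<alpha> uu) \<le> \<rho>" for t uu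
  proof -
    have "d (\<alpha> (f t)) (\<alpha> uu) \<le> d (\<alpha> (f t)) (q t) + d (q t) (\<alpha> uu)"
      using triangle[OF aM qM aM] fP that by auto
    then show ?thesis using fP that ad commute[of "\<alpha> (f t)" "q t"] by force
  qed
  have Fa: "\<bar>f a - u1\<bar> \<le> m + \<rho>" and Fb: "\<bar>f b - u2\<bar> \<le> m + \<rho>"
    using Fend[of a u1] Fend[of b u2] ab u qa qb by auto
  define v where "v = f s"
  have vA: "v \<in> {0..A}" "d (q s) (\<alpha> v) \<le> m" using fP s v_def by auto
  have near: "\<exists>t. d (q s) (\<gamma> t) \<le> quasi_radius N K C \<rho>"
    if "uu \<in> {0..A}" "d (\<gamma> ss) (\<alpha> uu) \<le> \<rho>" "\<bar>v - uu\<bar> \<le> m + \<rho> + B0" for uu ss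
  proof -
    have "d (q s) (\<gamma> ss) \<le> d (q s) (\<alpha> v) + d (\<alpha> v) (\<alpha> uu) + d (\<alpha> uu) (\<gamma> ss)"
      using triangle[OF qM[OF s] aM[OF vA(1)] gM[of ss]] triangle[OF aM[OF vA(1)] aM[OF that(1)] gM[of ss]]
      by linarith
    then show ?thesis using vA that ad[OF vA(1) that(1)] commute[of "\<alpha> uu" "\<gamma> ss"] Rc m0
      unfolding R by (intro exI[of _ ss]) linarith
  qed
  have "(min u1 u2 \<le> v \<and> v \<le> max u1 u2) \<or> \<bar>v - u1\<bar> \<le> m + \<rho> + B0 \<or> \<bar>v - u2\<bar> \<le> m + \<rho> + B0"
    using Fa Fb low up unfolding v_def by (auto simp: min_def max_def abs_if split: if_splits)
  then show ?thesis
  proof (elim disjE)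
    assume vm: "min u1 u2 \<le> v \<and> v \<le> max u1 u2"
    obtain t where t: "d (\<alpha> v) (\<gamma> t) \<le> cover_radius N \<rho>"
    proof (cases "s1 \<le> s2")
      case True
      then show ?thesis using geodesic_near_morse_between[OF mg m ai g True \<rho> u] vm that by auto
    next
      case False
      then have "s2 \<le> s1" by auto
      then show ?thesis using geodesic_near_morse_between[OF mg m ai g _ \<rho> u(2) u(1) u(4) u(3)] vm that
        by (auto simp: min.commute max.commute)
    qed
    have "d (q s) (\<gamma> t) \<le> d (q s) (\<alpha> v) + d (\<alpha> v) (\<gamma> t)" using triangle[OF qM[OF s] aM[OF vA(1)] gM] .
    then show ?thesis using t vA m0 Rc B00 \<rho> unfolding R by (intro exI[of _ t]) linarith
  next
    assume "\<bar>v - u1\<bar> \<le> m + \<rho> + B0" then show ?thesis using near u by blast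
  next
    assume "\<bar>v - u2\<bar> \<le> m + \<rho> + B0" then show ?thesis using near u by blast
  qed
qed

text \<open>The part of a quasigeodesic up to a point almost closest to \<open>\<gamma> 0\<close>, followed by a geodesic
  to \<open>\<gamma> 0\<close>, is again a quasigeodesic with both ends on \<open>\<gamma>\<close>.\<close>
lemma quasigeodesic_to_origin_near_geodesic:
  assumes mg: "morse_gauge N" and G: "geodesic_mspace M d"
    and g: "isometric_on M d \<gamma> UNIV" and \<rho>: "0 \<le> \<rho>"
    and q: "quasigeodesic M d K C q a b" and K: "1 \<le> K" "0 \<le> C" and qa: "q a = \<gamma> s1"
    and \<tau>: "\<tau> \<in> {a..b}" "\<forall>t\<in>{a..b}. d (\<gamma> 0) (q \<tau>) \<le> d (\<gamma> 0) (q t) + 1"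
    and s: "s \<in> {a..\<tau>}" and H: "near_common_morse M d N \<rho> (\<gamma> s1) (\<gamma> 0)"
  shows "\<exists>t. d (q s) (\<gamma> t) \<le> quasi_radius N (3*K) (C+1) \<rho>"
proof -
  have "q \<tau> \<in> M" "\<gamma> 0 \<in> M" using quasigeodesic_mem[OF q \<tau>(1)] isometric_on_mem[OF g] by auto
  then obtain gg where gg: "isometric_on M d gg {0..d (q \<tau>) (\<gamma> 0)}" "gg 0 = q \<tau>"
    "gg (d (q \<tau>) (\<gamma> 0)) = \<gamma> 0"
    using geodesic_segment_exists[OF G] by metis
  define ll where "ll = d (q \<tau>) (\<gamma> 0)"
  let ?p = "\<lambda>t. if t \<le> \<tau> then q t else gg (t - \<tau>)"
  have P: "quasigeodesic M d (3*K) (C+1) ?p a (\<tau> + ll)"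
    by (rule quasigeodesic_append_geodesic[OF q K \<tau> gg[folded ll_def] ll_def])
  have pa: "?p a = \<gamma> s1" using \<tau> qa by auto
  have pb: "?p (\<tau> + ll) = \<gamma> 0"
  proof (cases "ll = 0")
    case False
    then have "0 < ll" using ll_def nonneg[of "q \<tau>" "\<gamma> 0"] by linarith
    then show ?thesis using gg ll_def by auto
  qed (use gg ll_def in auto)
  obtain \<alpha> A u1 u2 where H': "morse M d N \<alpha> {0..A}" "isometric_on M d \<alpha> {0..A}"
    "u1 \<in> {0..A}" "u2 \<in> {0..A}" "d (\<gamma> s1) (\<alpha> u1) \<le> \<rho>" "d (\<gamma> 0) (\<alpha> u2) \<le> \<rho>"
    using H unfolding near_common_morse_def by blast
  have "s \<in> {a..\<tau> + ll}"
    using s ll_def nonneg[of "q \<tau>" "\<gamma> 0"] unfolding atLeastAtMost_iff by linarith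
  then obtain t where "d (?p s) (\<gamma> t) \<le> quasi_radius N (3*K) (C+1) \<rho>"
    using quasigeodesic_near_geodesic[OF mg H'(1,2) g \<rho> P _ _ pa pb H'(3-6)] K by auto
  then show ?thesis using s by auto
qed

lemma quasigeodesic_across_origin:
  assumes mg: "morse_gauge N" and G: "geodesic_mspace M d"
    and g: "isometric_on M d \<gamma> UNIV" and \<rho>: "0 \<le> \<rho>"
    and HX: "\<And>s1 s2. s1 \<le> 0 \<Longrightarrow> s2 \<le> 0 \<Longrightarrow> near_common_morse M d N \<rho> (\<gamma> s1) (\<gamma> s2)"
    and HY: "\<And>s1 s2. 0 \<le> s1 \<Longrightarrow> 0 \<le> s2 \<Longrightarrow> near_common_morse M d N \<rho> (\<gamma> s1) (\<gamma> s2)"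
    and q: "quasigeodesic M d K C q a b" and K: "1 \<le> K" "0 \<le> C"
    and qa: "q a = \<gamma> s1" and qb: "q b = \<gamma> s2" and s12: "s1 \<le> 0" "0 \<le> s2"
    and s: "s \<in> {a..b}"
  shows "\<exists>t. d (q s) (\<gamma> t) \<le> quasi_radius N (3*K) (C+1) \<rho>"
proof -
  have ab: "a \<le> b" using q unfolding quasigeodesic_def by auto
  obtain \<tau> where \<tau>: "\<tau> \<in> {a..b}" "\<forall>t\<in>{a..b}. d (\<gamma> 0) (q \<tau>) \<le> d (\<gamma> 0) (q t) + 1"
    using exists_almost_min[OF ab, of "\<lambda>t. d (\<gamma> 0) (q t)"] by auto
  show ?thesis
  proof (cases "s \<le> \<tau>")
    case True
    then show ?thesis
      using quasigeodesic_to_origin_near_geodesic[OF mg G g \<rho> q K qa \<tau>] HX[OF s12(1) order_refl] s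
      by auto
  next
    case False
    define rq where "rq = (\<lambda>t. q (a + b - t))"
    have "quasigeodesic M d K C rq a b" unfolding rq_def by (rule quasigeodesic_reflect[OF q])
    moreover have "rq a = \<gamma> s2" using qb rq_def by simp
    moreover have "a + b - \<tau> \<in> {a..b}" "\<forall>t\<in>{a..b}. d (\<gamma> 0) (rq (a + b - \<tau>)) \<le> d (\<gamma> 0) (rq t) + 1"
      using \<tau> unfolding rq_def by auto
    moreover have "a + b - s \<in> {a..a + b - \<tau>}" using s False by auto
    ultimately obtain t where "d (rq (a + b - s)) (\<gamma> t) \<le> quasi_radius N (3*K) (C+1) \<rho>"
      using quasigeodesic_to_origin_near_geodesic[OF mg G g \<rho> _ K] HY[OF s12(2) order_refl] by blast
    then show ?thesis unfolding rq_def by auto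
  qed
qed

lemma biinfinite_geodesic_morse:
  assumes mg: "morse_gauge N" and G: "geodesic_mspace M d"
    and g: "isometric_on M d \<gamma> UNIV" and \<rho>: "0 \<le> \<rho>"
    and HX: "\<And>s1 s2. s1 \<le> 0 \<Longrightarrow> s2 \<le> 0 \<Longrightarrow> near_common_morse M d N \<rho> (\<gamma> s1) (\<gamma> s2)"
    and HY: "\<And>s1 s2. 0 \<le> s1 \<Longrightarrow> 0 \<le> s2 \<Longrightarrow> near_common_morse M d N \<rho> (\<gamma> s1) (\<gamma> s2)"
  shows "morse M d (limit_gauge N \<rho>) \<gamma> UNIV"
  unfolding morse_def
proof (intro allI impI subsetI)
  fix K C q a b x
  assume K: "1 \<le> K" and C: "0 \<le> C" and q: "quasigeodesic M d K C q a b"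
    and qa: "q a \<in> \<gamma> ` UNIV" and qb: "q b \<in> \<gamma> ` UNIV" and x: "x \<in> q ` {a..b}"
  obtain s where s: "s \<in> {a..b}" "x = q s" using x by auto
  obtain s1 s2 where s12: "q a = \<gamma> s1" "q b = \<gamma> s2" using qa qb by auto
  have same_side: "\<exists>t. d (q s) (\<gamma> t) \<le> quasi_radius N K C \<rho>"
    if "near_common_morse M d N \<rho> (\<gamma> s1) (\<gamma> s2)"
    using that quasigeodesic_near_geodesic[OF mg _ _ g \<rho> q K C s12 _ _ _ _ s(1)]
    unfolding near_common_morse_def by blast
  have "\<exists>t. d (q s) (\<gamma> t) \<le> limit_gauge N \<rho> K C"
  proof -
    consider "s1 \<le> 0" "s2 \<le> 0" | "0 \<le> s1" "0 \<le> s2" | "s1 \<le> 0" "0 \<le> s2" | "0 \<le> s1" "s2 \<le> 0"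
      by linarith
    then show ?thesis
    proof cases
      case 1
      then show ?thesis using same_side HX unfolding limit_gauge_def by (meson max.coboundedI1)
    next
      case 2
      then show ?thesis using same_side HY unfolding limit_gauge_def by (meson max.coboundedI1)
    next
      case 3
      then show ?thesis using quasigeodesic_across_origin[OF mg G g \<rho> HX HY q K C s12 3 s(1)]
        unfolding limit_gauge_def by (meson max.coboundedI2)
    next
      case 4
      define rq where "rq = (\<lambda>t. q (a + b - t))"
      have rq: "quasigeodesic M d K C rq a b" unfolding rq_def by (rule quasigeodesic_reflect[OF q])
      have e: "rq a = \<gamma> s2" "rq b = \<gamma> s1" using s12 unfolding rq_def by auto
      have sr: "a + b - s \<in> {a..b}" using s by auto
      obtain t where "d (rq (a + b - s)) (\<gamma> t) \<le> quasi_radius N (3*K) (C+1) \<rho>"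
        using quasigeodesic_across_origin[OF mg G g \<rho> HX HY rq K C e 4(2) 4(1) sr] by blast
      then show ?thesis unfolding limit_gauge_def rq_def by (intro exI[of _ t]) (simp add: max.coboundedI2)
    qed
  qed
  then show "x \<in> nbhd M d (limit_gauge N \<rho> K C) (\<gamma> ` UNIV)"
    unfolding nbhd_def using quasigeodesic_mem[OF q s(1)] s by auto
qed

section \<open>Gromov products along Morse triangles\<close>

lemma gprod_commute: "gprod d e x y = gprod d e y x"
  unfolding gprod_def using commute by simp

lemma gprod_nonneg: "e \<in> M \<Longrightarrow> x \<in> M \<Longrightarrow> y \<in> M \<Longrightarrow> 0 \<le> gprod d e x y"
  unfolding gprod_def using triangle[of x e y] commute[of x e] by simp

lemma gprod_le_dist_geodesic:
  assumes z: "isometric_on M d \<zeta> {0..L}" "\<zeta> 0 = x" "\<zeta> L = y" "L = d x y" and eM: "e \<in> M"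
    and t: "t \<in> {0..L}"
  shows "gprod d e x y \<le> d e (\<zeta> t)"
proof -
  have L0: "0 \<in> {0..L}" "L \<in> {0..L}" using t by auto
  have m0: "\<zeta> 0 \<in> M" "\<zeta> L \<in> M" "\<zeta> t \<in> M" using isometric_on_mem[OF z(1)] L0 t by auto
  have m: "x \<in> M" "y \<in> M" "\<zeta> t \<in> M" using m0 z(2,3) by auto
  have d0: "d (\<zeta> t) (\<zeta> 0) = t" "d (\<zeta> t) (\<zeta> L) = L - t" using isometric_on_dist[OF z(1)] t L0 by auto
  have d1: "d (\<zeta> t) x = t" "d (\<zeta> t) y = L - t" using d0 z(2,3) by auto
  have "d e x \<le> d e (\<zeta> t) + d (\<zeta> t) x" "d e y \<le> d e (\<zeta> t) + d (\<zeta> t) y"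
    using triangle[OF eM m(3) m(1)] triangle[OF eM m(3) m(2)] .
  then show ?thesis unfolding gprod_def using d1 z(4) by argo
qed

lemma gprod_ge_geodesics:
  assumes a: "isometric_on M d \<alpha> {0..A}" "\<alpha> 0 = e" "\<alpha> A = x"
    and b: "isometric_on M d \<beta> {0..B}" "\<beta> 0 = e" "\<beta> B = y"
    and v: "v \<in> {0..A}" and w: "w \<in> {0..B}"
  shows "(v + w - d (\<alpha> v) (\<beta> w))/2 \<le> gprod d e x y"
proof -
  have A0: "0 \<in> {0..A}" "A \<in> {0..A}" "0 \<in> {0..B}" "B \<in> {0..B}" using v w by auto
  have m: "x \<in> M" "y \<in> M" "\<alpha> v \<in> M" "\<beta> w \<in> M" using isometric_on_mem[OF a(1)] isometric_on_mem[OF b(1)] A0 v w a b by auto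
  have d0: "d (\<alpha> 0) (\<alpha> A) = A" "d (\<beta> 0) (\<beta> B) = B" "d (\<alpha> A) (\<alpha> v) = A - v" "d (\<beta> w) (\<beta> B) = B - w"
    using isometric_on_dist[OF a(1), of 0 A] isometric_on_dist[OF b(1), of 0 B] isometric_on_dist[OF a(1), of A v] isometric_on_dist[OF b(1), of w B] A0 v w by auto
  have d1: "d e x = A" "d e y = B" "d x (\<alpha> v) = A - v" "d (\<beta> w) y = B - w"
    using d0 a(2,3) b(2,3) by auto
  have "d x y \<le> d x (\<alpha> v) + d (\<alpha> v) (\<beta> w) + d (\<beta> w) y"
    using triangle[OF m(1) m(3) m(2)] triangle[OF m(3) m(4) m(2)] by linarith
  then show ?thesis unfolding gprod_def using d1 by argo
qed

lemma morse_triangle_thin: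
  assumes G: "geodesic_mspace M d"
    and m1: "morse M d N \<alpha>1 {0..A1}" "isometric_on M d \<alpha>1 {0..A1}" "\<alpha>1 0 = e" "\<alpha>1 A1 = x" "0 \<le> A1"
    and m2: "morse M d N \<alpha>2 {0..A2}" "isometric_on M d \<alpha>2 {0..A2}" "\<alpha>2 0 = e" "\<alpha>2 A2 = y" "0 \<le> A2"
  shows "\<exists>p v1 v2. v1 \<in> {0..A1} \<and> v2 \<in> {0..A2} \<and> d p (\<alpha>1 v1) \<le> N 3 0 \<and> d p (\<alpha>2 v2) \<le> N 3 0
     \<and> gprod d e x y \<le> d e p \<and> p \<in> M"
proof -
  have aM1: "\<alpha>1 ` {0..A1} \<subseteq> M" using m1 unfolding isometric_on_def by auto
  have aM2: "\<alpha>2 ` {0..A2} \<subseteq> M" using m2 unfolding isometric_on_def by auto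
  have xI: "x \<in> \<alpha>1 ` {0..A1}" "e \<in> \<alpha>1 ` {0..A1}" using m1 by (auto intro!: image_eqI)
  have yI: "y \<in> \<alpha>2 ` {0..A2}" "e \<in> \<alpha>2 ` {0..A2}" using m2 by (auto intro!: image_eqI)
  have xyM: "x \<in> M" "y \<in> M" "e \<in> M" using xI yI aM1 aM2 by auto
  obtain \<zeta> where z: "isometric_on M d \<zeta> {0..d x y}" "\<zeta> 0 = x" "\<zeta> (d x y) = y"
    using geodesic_segment_exists[OF G xyM(1,2)] .
  define Lz where "Lz = d x y"
  have Lz: "0 \<le> Lz" using Lz_def by simp
  obtain \<sigma> where \<sigma>: "\<sigma> \<in> {0..Lz}" "\<forall>t\<in>{0..Lz}. d e (\<zeta> \<sigma>) \<le> d e (\<zeta> t)"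
    using isometric_on_closest_point[OF z(1)[folded Lz_def] Lz xyM(3)] by blast
  have zs: "isometric_on M d \<zeta> {0..\<sigma>}" using isometric_on_subset[OF z(1)] \<sigma> Lz_def by auto
  obtain v1 where v1: "v1 \<in> {0..A1}" "d (\<zeta> \<sigma>) (\<alpha>1 v1) \<le> N 3 0"
  proof -
    have "\<exists>u\<in>{0..A1}. d (\<zeta> \<sigma>) (\<alpha>1 u) \<le> N 3 0"
      by (rule projection_path_near_morse[OF G m1(1) aM1 xI zs]) (use \<sigma> z xyM in auto)
    then show ?thesis using that by blast
  qed
  define \<zeta>' where "\<zeta>' t = \<zeta> (Lz - t)" for t
  have z': "isometric_on M d \<zeta>' {0..Lz}" using isometric_on_reflect[OF z(1)[folded Lz_def]] unfolding \<zeta>'_def by simp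
  have zs': "isometric_on M d \<zeta>' {0..Lz - \<sigma>}" using isometric_on_subset[OF z'] \<sigma> by auto
  have z'0: "\<zeta>' 0 = y" "\<zeta>' (Lz - \<sigma>) = \<zeta> \<sigma>" using z Lz_def \<zeta>'_def by auto
  obtain v2 where v2: "v2 \<in> {0..A2}" "d (\<zeta> \<sigma>) (\<alpha>2 v2) \<le> N 3 0"
  proof -
    have "\<exists>u\<in>{0..A2}. d (\<zeta>' (Lz - \<sigma>)) (\<alpha>2 u) \<le> N 3 0"
    proof (rule projection_path_near_morse[OF G m2(1) aM2 yI zs'])
      show "\<forall>t\<in>{0..Lz - \<sigma>}. d y (\<zeta>' 0) \<le> d y (\<zeta>' t)" using z'0 xyM by simp
      show "\<forall>t\<in>{0..Lz - \<sigma>}. d e (\<zeta>' (Lz - \<sigma>)) \<le> d e (\<zeta>' t)" using \<sigma> unfolding \<zeta>'_def by auto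
    qed (use \<sigma> z'0 xyM in auto)
    then show ?thesis using that z'0 by auto
  qed
  have "gprod d e x y \<le> d e (\<zeta> \<sigma>)" by (rule gprod_le_dist_geodesic[OF z(1)[folded Lz_def] z(2) z(3)[folded Lz_def] Lz_def xyM(3) \<sigma>(1)])
  moreover have "\<zeta> \<sigma> \<in> M" using isometric_on_mem[OF z(1)] \<sigma> Lz_def by auto
  ultimately show ?thesis using v1 v2 by blast
qed

text \<open>If the Morse geodesics to \<open>x0\<close> and \<open>y0\<close> pass within \<open>\<rho>\<close> of each other at distance \<open>u2\<close> from
  \<open>e\<close>, then \<open>(x \<cdot> y)\<^sub>e\<close> is large as soon as \<open>(x \<cdot> x0)\<^sub>e\<close> and \<open>(y \<cdot> y0)\<^sub>e\<close> are: follow the thin triangles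
  from \<open>x\<close> to \<open>x0\<close>, then from \<open>x0\<close> across to \<open>y0\<close>, then from \<open>y0\<close> to \<open>y\<close>.\<close>
lemma gprod_ge_fellow_travel:
  assumes mg: "morse_gauge N" and G: "geodesic_mspace M d"
    and \<alpha>: "morse M d N \<alpha> {0..A}" "isometric_on M d \<alpha> {0..A}" "\<alpha> 0 = e" "\<alpha> A = x0" "0 \<le> A"
    and \<beta>: "morse M d N \<beta> {0..B}" "isometric_on M d \<beta> {0..B}" "\<beta> 0 = e" "\<beta> B = y0" "0 \<le> B"
    and \<alpha>': "morse M d N \<alpha>' {0..A'}" "isometric_on M d \<alpha>' {0..A'}" "\<alpha>' 0 = e" "\<alpha>' A' = x" "0 \<le> A'"
    and \<beta>': "morse M d N \<beta>' {0..B'}" "isometric_on M d \<beta>' {0..B'}" "\<beta>' 0 = e" "\<beta>' B' = y" "0 \<le> B'"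
    and u: "u1 \<in> {0..A}" "u2 \<in> {0..B}" "d (\<beta> u2) (\<alpha> u1) \<le> \<rho>"
  shows "min u2 (min (gprod d e y y0 - N 3 0) (gprod d e x x0 - N 3 0 - (N 1 (2*\<rho>) + \<rho>)))
      - (N 1 (2*\<rho>) + \<rho>) - 2 * (N 1 (2*(2 * N 3 0)) + 2 * N 3 0) \<le> gprod d e x y"
proof -
  define r where "r = N 3 0"
  define m2 where "m2 = N 1 (2*\<rho>) + \<rho>"
  define m3 where "m3 = N 1 (2*(2*r)) + 2*r"
  define \<tau>0 where "\<tau>0 = min u2 (min (gprod d e y y0 - r) (gprod d e x x0 - r - m2))"
  have \<rho>: "0 \<le> \<rho>" using u(3) nonneg[of "\<beta> u2" "\<alpha> u1"] by linarith
  have nn: "0 \<le> r" "0 \<le> m2" "0 \<le> m3" using mg \<rho> unfolding morse_gauge_def r_def m2_def m3_def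
    by (auto intro!: add_nonneg_nonneg)
  have eM: "e \<in> M" and xM: "x \<in> M" and yM: "y \<in> M"
    using geodesic_from_base[OF \<alpha>'(2,3), of 0] geodesic_from_base[OF \<alpha>'(2,3), of A']
      geodesic_from_base[OF \<beta>'(2,3), of B'] \<alpha>' \<beta>' by auto
  show ?thesis
  proof (cases "0 \<le> \<tau>0")
    case False
    then show ?thesis using gprod_nonneg[OF eM xM yM] nn unfolding \<tau>0_def r_def m2_def m3_def by argo
  next
    case True
    obtain p v1 v2 where P: "v1 \<in> {0..A'}" "v2 \<in> {0..A}" "d p (\<alpha>' v1) \<le> r" "d p (\<alpha> v2) \<le> r"
      "gprod d e x x0 \<le> d e p" "p \<in> M"
      using morse_triangle_thin[OF G \<alpha>'(1-5) \<alpha>(1-5)] unfolding r_def by blast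
    obtain q w1 w2 where Q: "w1 \<in> {0..B'}" "w2 \<in> {0..B}" "d q (\<beta>' w1) \<le> r" "d q (\<beta> w2) \<le> r"
      "gprod d e y y0 \<le> d e q" "q \<in> M"
      using morse_triangle_thin[OF G \<beta>'(1-5) \<beta>(1-5)] unfolding r_def by blast
    have av2: "\<alpha> v2 \<in> M" "d e (\<alpha> v2) = v2" and bw2: "\<beta> w2 \<in> M" "d e (\<beta> w2) = w2"
      and av1: "\<alpha>' v1 \<in> M" and bw1: "\<beta>' w1 \<in> M"
      using geodesic_from_base[OF \<alpha>(2,3) P(2)] geodesic_from_base[OF \<beta>(2,3) Q(2)]
        geodesic_from_base[OF \<alpha>'(2,3) P(1)] geodesic_from_base[OF \<beta>'(2,3) Q(1)] by auto
    have "gprod d e x x0 - r \<le> v2" "d (\<alpha> v2) (\<alpha>' v1) \<le> 2*r"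
      using triangle[OF eM av2(1) P(6)] triangle[OF av2(1) P(6) av1] P(3-5) av2 commute[of "\<alpha> v2" p]
      by linarith+
    moreover have "gprod d e y y0 - r \<le> w2" "d (\<beta> w2) (\<beta>' w1) \<le> 2*r"
      using triangle[OF eM bw2(1) Q(6)] triangle[OF bw2(1) Q(6) bw1] Q(3-5) bw2 commute[of "\<beta> w2" q]
      by linarith+
    ultimately have t0: "\<tau>0 \<le> u2" "\<tau>0 \<le> w2" "\<tau>0 \<le> v2 - m2" and d2: "d (\<alpha> v2) (\<alpha>' v1) \<le> 2*r"
      and d3: "d (\<beta> w2) (\<beta>' w1) \<le> 2*r" unfolding \<tau>0_def by auto
    obtain u where u': "u \<in> {0..A}" "d (\<beta> \<tau>0) (\<alpha> u) \<le> m2" "\<bar>\<tau>0 - u\<bar> \<le> m2"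
      using morse_fellow_travel[OF \<alpha>(1-3) \<beta>(2,3) u(2,1,3), of \<tau>0] True t0 unfolding m2_def by auto
    then have "u \<in> {0..v2}" using t0 by auto
    then obtain v where v: "v \<in> {0..A'}" "d (\<alpha> u) (\<alpha>' v) \<le> m3" "\<bar>u - v\<bar> \<le> m3"
      using morse_fellow_travel[OF \<alpha>'(1-3) \<alpha>(2,3) P(2,1) d2] unfolding m3_def by blast
    obtain w where w: "w \<in> {0..B'}" "d (\<beta> \<tau>0) (\<beta>' w) \<le> m3" "\<bar>\<tau>0 - w\<bar> \<le> m3"
      using morse_fellow_travel[OF \<beta>'(1-3) \<beta>(2,3) Q(2,1) d3, of \<tau>0] True t0 unfolding m3_def by auto
    have Ms: "\<alpha>' v \<in> M" "\<alpha> u \<in> M" "\<beta> \<tau>0 \<in> M" "\<beta>' w \<in> M"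
      using geodesic_from_base[OF \<alpha>'(2,3) v(1)] geodesic_from_base[OF \<alpha>(2,3) u'(1)]
        geodesic_from_base[OF \<beta>(2,3), of \<tau>0] geodesic_from_base[OF \<beta>'(2,3) w(1)] True t0 u(2) by auto
    have "d (\<alpha>' v) (\<beta>' w) \<le> d (\<alpha>' v) (\<alpha> u) + d (\<alpha> u) (\<beta> \<tau>0) + d (\<beta> \<tau>0) (\<beta>' w)"
      by (rule triangle4[OF Ms])
    then have "d (\<alpha>' v) (\<beta>' w) \<le> 2*m3 + m2"
      using v(2) u'(2) w(2) commute[of "\<alpha>' v" "\<alpha> u"] commute[of "\<alpha> u" "\<beta> \<tau>0"] by linarith
    moreover have "(v + w - d (\<alpha>' v) (\<beta>' w))/2 \<le> gprod d e x y"
      by (rule gprod_ge_geodesics[OF \<alpha>'(2-4) \<beta>'(2-4) v(1) w(1)])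
    moreover have "u - m3 \<le> v" "\<tau>0 - m3 \<le> w" "\<tau>0 - m2 \<le> u" using v(3) w(3) u'(3) by (auto simp: abs_le_iff)
    ultimately show ?thesis unfolding \<tau>0_def[symmetric] r_def[symmetric] m2_def[symmetric] m3_def[symmetric]
      by argo
  qed
qed

section \<open>Limits of geodesics in proper spaces\<close>

lemma proper_convergent_subseq:
  fixes \<sigma> :: "nat \<Rightarrow> 'a"
  assumes "proper_mspace M d" "e \<in> M" "range \<sigma> \<subseteq> mcball e r"
  shows "\<exists>l s. strict_mono s \<and> limitin mtopology (\<sigma> \<circ> s) l sequentially"
proof -
  have "compactin mtopology (mcball e r)" using assms(1,2) unfolding proper_mspace_def by blast
  then show ?thesis using assms(3) unfolding compactin_sequentially by blast
qed

lemma proper_subseq_converges_at_rationals: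
  fixes H :: "nat \<Rightarrow> real \<Rightarrow> 'a"
  assumes P: "proper_mspace M d" and eM: "e \<in> M" and H: "\<And>k t. H k t \<in> mcball e (R + \<bar>t\<bar>)"
  shows "\<exists>r. strict_mono r \<and> (\<forall>i. \<exists>l. limitin mtopology (\<lambda>k. H (r k) (rat_enum i)) l sequentially)"
proof -
  interpret S: subseqs "\<lambda>i s. \<exists>l. limitin mtopology (\<lambda>k. H (s k) (rat_enum i)) l sequentially"
  proof
    fix i :: nat and s :: "nat \<Rightarrow> nat"
    have "range (\<lambda>k. H (s k) (rat_enum i)) \<subseteq> mcball e (R + \<bar>rat_enum i\<bar>)" using H by auto
    then obtain l r' where "strict_mono r'" "limitin mtopology ((\<lambda>k. H (s k) (rat_enum i)) \<circ> r') l sequentially"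
      using proper_convergent_subseq[OF P eM] by blast
    then show "\<exists>r'. strict_mono r' \<and> (\<exists>l. limitin mtopology (\<lambda>k. H ((s \<circ> r') k) (rat_enum i)) l sequentially)"
      by (auto simp: o_def)
  qed
  have "\<exists>l. limitin mtopology (\<lambda>k. H (S.diagseq k) (rat_enum i)) l sequentially" for i
  proof -
    have "\<exists>l. limitin mtopology (\<lambda>k. H ((S.diagseq \<circ> (+) (Suc i)) k) (rat_enum i)) l sequentially"
    proof (rule S.diagseq_holds)
      fix r' s n assume "strict_mono (r'::nat\<Rightarrow>nat)" "\<exists>l. limitin mtopology (\<lambda>k. H (s k) (rat_enum n)) l sequentially"
      then show "\<exists>l. limitin mtopology (\<lambda>k. H ((s \<circ> r') k) (rat_enum n)) l sequentially"
        using limitin_subsequence by (fastforce simp: o_def)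
    qed
    then obtain l where "limitin mtopology (\<lambda>k. H (S.diagseq (k + Suc i)) (rat_enum i)) l sequentially"
      by (auto simp: o_def add.commute)
    then show ?thesis
      using limitin_sequentially_offset_rev[where f = "\<lambda>k. H (S.diagseq k) (rat_enum i)"] by blast
  qed
  then show ?thesis using S.subseq_diagseq by blast
qed

lemma eventually_isometric_MCauchy:
  assumes HM: "\<And>k t. H k t \<in> M" and iso: "eventually_isometric M d H"
    and conv: "\<And>i. \<exists>l. limitin mtopology (\<lambda>k. H k (rat_enum i)) l sequentially"
  shows "MCauchy (\<lambda>k. H k t)"
  unfolding MCauchy_def
proof (intro conjI allI impI)
  show "range (\<lambda>k. H k t) \<subseteq> M" using HM by auto
  fix \<epsilon> :: real assume \<epsilon>: "0 < \<epsilon>"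
  obtain i where i: "t - \<epsilon>/4 < rat_enum i" "rat_enum i < t + \<epsilon>/4"
    using rat_enum_dense[of "t - \<epsilon>/4" "t + \<epsilon>/4"] \<epsilon> by auto
  obtain l where l: "limitin mtopology (\<lambda>k. H k (rat_enum i)) l sequentially" using conv by blast
  have "MCauchy (\<lambda>k. H k (rat_enum i))" by (rule convergent_imp_MCauchy[OF _ l]) (use HM in auto)
  then obtain N1 where N1: "\<And>n n'. N1 \<le> n \<Longrightarrow> N1 \<le> n' \<Longrightarrow> d (H n (rat_enum i)) (H n' (rat_enum i)) < \<epsilon>/4"
    unfolding MCauchy_def using \<epsilon> by (meson zero_less_divide_iff zero_less_numeral)
  obtain N2 where N2: "\<And>k s t'. N2 \<le> k \<Longrightarrow> \<bar>s\<bar> \<le> \<bar>t\<bar> + \<bar>rat_enum i\<bar> \<Longrightarrow> \<bar>t'\<bar> \<le> \<bar>t\<bar> + \<bar>rat_enum i\<bar>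
      \<Longrightarrow> d (H k s) (H k t') = \<bar>s - t'\<bar>"
    using eventually_isometricD[OF iso] by blast
  show "\<exists>N. \<forall>n n'. N \<le> n \<longrightarrow> N \<le> n' \<longrightarrow> d (H n t) (H n' t) < \<epsilon>"
  proof (intro exI[of _ "max N1 N2"] allI impI)
    fix n n' assume n: "max N1 N2 \<le> n" "max N1 N2 \<le> n'"
    have "d (H n t) (H n' t) \<le> d (H n t) (H n (rat_enum i)) + d (H n (rat_enum i)) (H n' (rat_enum i))
        + d (H n' (rat_enum i)) (H n' t)"
      by (rule triangle4) (rule HM)+
    moreover have "d (H n t) (H n (rat_enum i)) = \<bar>t - rat_enum i\<bar>"
      "d (H n' (rat_enum i)) (H n' t) = \<bar>rat_enum i - t\<bar>" using N2 n by auto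
    moreover have "d (H n (rat_enum i)) (H n' (rat_enum i)) < \<epsilon>/4" using N1 n by auto
    ultimately show "d (H n t) (H n' t) < \<epsilon>" using i by (simp add: abs_minus_commute) argo
  qed
qed

lemma eventually_isometric_limit_isometric:
  assumes HM: "\<And>k t. H k t \<in> M" and iso: "eventually_isometric M d H"
    and lim: "\<And>t. limitin mtopology (\<lambda>k. H k t) (\<gamma> t) sequentially"
  shows "isometric_on M d \<gamma> UNIV"
  unfolding isometric_on_def
proof (intro conjI ballI)
  have gM: "\<gamma> t \<in> M" for t using lim limitin_mspace by blast
  then show "\<gamma> ` UNIV \<subseteq> M" by auto
  fix s t :: real
  have "\<bar>d (\<gamma> s) (\<gamma> t) - \<bar>s - t\<bar>\<bar> \<le> 2*\<epsilon>" if \<epsilon>: "0 < \<epsilon>" for \<epsilon>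
  proof -
    obtain N1 where N1: "\<forall>k\<ge>N1. d (H k s) (\<gamma> s) < \<epsilon>" using lim[of s] \<epsilon> unfolding limit_metric_sequentially by blast
    obtain N2 where N2: "\<forall>k\<ge>N2. d (H k t) (\<gamma> t) < \<epsilon>" using lim[of t] \<epsilon> unfolding limit_metric_sequentially by blast
    obtain N3 where N3: "\<And>k s' t'. N3 \<le> k \<Longrightarrow> \<bar>s'\<bar> \<le> \<bar>s\<bar> + \<bar>t\<bar> \<Longrightarrow> \<bar>t'\<bar> \<le> \<bar>s\<bar> + \<bar>t\<bar>
        \<Longrightarrow> d (H k s') (H k t') = \<bar>s' - t'\<bar>"
      using eventually_isometricD[OF iso] by blast
    define k where "k = max N1 (max N2 N3)"
    have "d (H k s) (\<gamma> s) < \<epsilon>" "d (H k t) (\<gamma> t) < \<epsilon>" "d (H k s) (H k t) = \<bar>s - t\<bar>"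
      using N1 N2 N3 k_def by auto
    moreover have "d (\<gamma> s) (\<gamma> t) \<le> d (\<gamma> s) (H k s) + d (H k s) (H k t) + d (H k t) (\<gamma> t)"
      "d (H k s) (H k t) \<le> d (H k s) (\<gamma> s) + d (\<gamma> s) (\<gamma> t) + d (\<gamma> t) (H k t)"
      by (rule triangle4; rule HM gM)+
    ultimately show ?thesis using commute[of "\<gamma> s" "H k s"] commute[of "\<gamma> t" "H k t"] by argo
  qed
  then have "\<bar>d (\<gamma> s) (\<gamma> t) - \<bar>s - t\<bar>\<bar> \<le> 0 + \<epsilon>" if "0 < \<epsilon>" for \<epsilon>
    using that by (metis add_0 field_sum_of_halves half_gt_zero mult_2)
  then have "\<bar>d (\<gamma> s) (\<gamma> t) - \<bar>s - t\<bar>\<bar> \<le> 0" by (rule field_le_epsilon)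
  then show "d (\<gamma> s) (\<gamma> t) = \<bar>s - t\<bar>" by simp
qed

text \<open>Compare with the limit on a finite grid of mesh \<open>\<epsilon>/4\<close>.\<close>
lemma eventually_isometric_limit_uniform:
  assumes HM: "\<And>k t. H k t \<in> M" and iso: "eventually_isometric M d H"
    and lim: "\<And>t. limitin mtopology (\<lambda>k. H k t) (\<gamma> t) sequentially" and \<epsilon>: "0 < \<epsilon>"
  shows "\<exists>k0. \<forall>k\<ge>k0. \<forall>t\<in>{-T..T}. d (H k t) (\<gamma> t) < \<epsilon>"
proof -
  have giso: "isometric_on M d \<gamma> UNIV" by (rule eventually_isometric_limit_isometric[OF HM iso lim])
  have gM: "\<gamma> t \<in> M" for t using lim limitin_mspace by blast
  define T' where "T' = max T 0"
  define \<delta> where "\<delta> = \<epsilon>/4"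
  have \<delta>: "0 < \<delta>" using \<epsilon> \<delta>_def by auto
  define J where "J = nat \<lceil>2*T'/\<delta>\<rceil>"
  define grid where "grid j = -T' + real j * \<delta>" for j :: nat
  have "\<forall>j\<in>{..J}. \<forall>\<^sub>F k in sequentially. d (H k (grid j)) (\<gamma> (grid j)) < \<delta>"
    using lim \<delta> unfolding limit_metric_sequentially eventually_sequentially by blast
  then have "\<forall>\<^sub>F k in sequentially. \<forall>j\<in>{..J}. d (H k (grid j)) (\<gamma> (grid j)) < \<delta>"
    by (intro eventually_ball_finite) auto
  then obtain k1 where k1: "\<forall>k\<ge>k1. \<forall>j\<in>{..J}. d (H k (grid j)) (\<gamma> (grid j)) < \<delta>"
    unfolding eventually_sequentially by blast
  obtain k2 where k2: "\<And>k s t. k2 \<le> k \<Longrightarrow> \<bar>s\<bar> \<le> T' + \<delta> \<Longrightarrow> \<bar>t\<bar> \<le> T' + \<delta> \<Longrightarrow> d (H k s) (H k t) = \<bar>s - t\<bar>"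
    using eventually_isometricD[OF iso] by blast
  show ?thesis
  proof (intro exI[of _ "max k1 k2"] allI impI ballI)
    fix k t assume k: "max k1 k2 \<le> k" and t: "t \<in> {-T..T}"
    have tT: "-T' \<le> t" "t \<le> T'" using t T'_def by auto
    define j where "j = nat \<lfloor>(t + T')/\<delta>\<rfloor>"
    have "real j = of_int \<lfloor>(t + T')/\<delta>\<rfloor>" using tT \<delta> j_def by simp
    then have "real j \<le> (t + T')/\<delta>" "(t + T')/\<delta> < real j + 1" by linarith+
    then have j2: "real j * \<delta> \<le> t + T'" "t + T' < real j * \<delta> + \<delta>"
      using \<delta> by (auto simp: field_simps)
    have jJ: "j \<in> {..J}"
    proof -
      have "(t + T')/\<delta> \<le> 2*T'/\<delta>" using tT \<delta> by (auto simp: divide_right_mono)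
      then have "\<lfloor>(t + T')/\<delta>\<rfloor> \<le> \<lceil>2*T'/\<delta>\<rceil>" by (meson floor_le_ceiling floor_mono order_trans)
      then show ?thesis unfolding j_def J_def by (simp add: nat_mono)
    qed
    have gj: "\<bar>grid j - t\<bar> \<le> \<delta>" "\<bar>grid j\<bar> \<le> T' + \<delta>" using j2 tT \<delta> unfolding grid_def by auto
    have "d (H k t) (\<gamma> t) \<le> d (H k t) (H k (grid j)) + d (H k (grid j)) (\<gamma> (grid j)) + d (\<gamma> (grid j)) (\<gamma> t)"
      by (rule triangle4) (rule HM gM)+
    moreover have "d (H k t) (H k (grid j)) = \<bar>t - grid j\<bar>" using k2[of k t "grid j"] k tT \<delta> gj by auto
    moreover have "d (H k (grid j)) (\<gamma> (grid j)) < \<delta>" using k1 k jJ by auto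
    moreover have "d (\<gamma> (grid j)) (\<gamma> t) = \<bar>grid j - t\<bar>" using isometric_on_dist[OF giso] by auto
    ultimately show "d (H k t) (\<gamma> t) < \<epsilon>" using gj \<delta>_def by (simp add: abs_minus_commute) argo
  qed
qed

text \<open>Arzela-Ascoli: extend the geodesics by the base point, extract a diagonal subsequence
  converging at all rational times, and use equicontinuity.\<close>
lemma geodesic_subseq_limit:
  fixes h :: "nat \<Rightarrow> real \<Rightarrow> 'a" and a b :: "nat \<Rightarrow> real" and R :: real
  assumes P: "proper_mspace M d" and eM: "e \<in> M"
  and h: "\<forall>k. isometric_on M d (h k) {a k..b k} \<and> a k \<le> 0 \<and> 0 \<le> b k \<and> d e (h k 0) \<le> R"
  and ab: "\<forall>T. \<exists>k0. \<forall>k\<ge>k0. a k \<le> -T \<and> T \<le> b k"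
  shows "\<exists>r \<gamma>. strict_mono (r :: nat \<Rightarrow> nat) \<and> isometric_on M d \<gamma> UNIV \<and>
     (\<forall>T \<epsilon>. 0 < \<epsilon> \<longrightarrow> (\<exists>k0. \<forall>k\<ge>k0. \<forall>t\<in>{-T..T}. a (r k) \<le> t \<and> t \<le> b (r k) \<and> d (h (r k) t) (\<gamma> t) < \<epsilon>))"
proof -
  define H where "H k t = (if a k \<le> t \<and> t \<le> b k then h k t else e)" for k t
  have R0: "0 \<le> R" using h nonneg[of e "h 0 0"] by (meson order_trans)
  have Hball: "H k t \<in> mcball e (R + \<bar>t\<bar>)" for k t
  proof (cases "a k \<le> t \<and> t \<le> b k")
    case True
    then have "h k 0 \<in> M" "h k t \<in> M" "d (h k 0) (h k t) = \<bar>t\<bar>"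
      using h isometric_on_mem[of "h k" "{a k..b k}"] isometric_on_dist[of "h k" "{a k..b k}" 0 t] by auto
    moreover have "d e (h k 0) \<le> R" using h by auto
    ultimately have "d e (h k t) \<le> R + \<bar>t\<bar>" using triangle[OF eM, of "h k 0" "h k t"] by linarith
    then show ?thesis using True \<open>h k t \<in> M\<close> eM unfolding H_def by auto
  next
    case False then show ?thesis using eM R0 unfolding H_def by auto
  qed
  have HM: "H k t \<in> M" for k t using Hball[of k t] by auto
  have within: "\<exists>k0. \<forall>k\<ge>k0. a (r k) \<le> -T \<and> T \<le> b (r k)" if "strict_mono r" for r :: "nat \<Rightarrow> nat" and T
  proof -
    obtain k0 where "\<forall>k\<ge>k0. a k \<le> -T \<and> T \<le> b k" using ab by blast
    then show ?thesis using seq_suble[OF that] by (metis order_trans)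
  qed
  have iso: "eventually_isometric M d H"
    unfolding eventually_isometric_def
  proof
    fix T
    obtain k0 where "\<forall>k\<ge>k0. a k \<le> -T \<and> T \<le> b k" using ab by blast
    then show "\<exists>k0. \<forall>k\<ge>k0. isometric_on M d (H k) {-T..T}"
      using h unfolding H_def isometric_on_def by (intro exI[of _ k0]) (auto simp: image_subset_iff)
  qed
  obtain r where r: "strict_mono r" "\<And>i. \<exists>l. limitin mtopology (\<lambda>k. H (r k) (rat_enum i)) l sequentially"
    using proper_subseq_converges_at_rationals[where H = H and R = R, OF P eM Hball] by blast
  have isor: "eventually_isometric M d (\<lambda>k. H (r k))" by (rule eventually_isometric_subseq[OF iso r(1)])
  have HMr: "\<And>k t. H (r k) t \<in> M" using HM by blast
  have "\<exists>l. limitin mtopology (\<lambda>k. H (r k) t) l sequentially" for t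
  proof -
    have "range (\<lambda>k. H (r k) t) \<subseteq> mcball e (R + \<bar>t\<bar>)" using Hball by auto
    then obtain l s where "strict_mono s" "limitin mtopology ((\<lambda>k. H (r k) t) \<circ> s) l sequentially"
      using proper_convergent_subseq[OF P eM] by blast
    then show ?thesis
      using MCauchy_convergent_subsequence[OF eventually_isometric_MCauchy[where H = "\<lambda>k. H (r k)", OF HMr isor r(2)]] by blast
  qed
  then obtain \<gamma> where lim: "\<And>t. limitin mtopology (\<lambda>k. H (r k) t) (\<gamma> t) sequentially" by metis
  have unif: "\<exists>k0. \<forall>k\<ge>k0. \<forall>t\<in>{-T..T}. a (r k) \<le> t \<and> t \<le> b (r k) \<and> d (h (r k) t) (\<gamma> t) < \<epsilon>"
    if \<epsilon>: "0 < \<epsilon>" for T \<epsilon>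
  proof -
    obtain k1 where k1: "\<forall>k\<ge>k1. \<forall>t\<in>{-T..T}. d (H (r k) t) (\<gamma> t) < \<epsilon>"
      using eventually_isometric_limit_uniform[where H = "\<lambda>k. H (r k)", OF HMr isor lim \<epsilon>] by blast
    obtain k2 where k2: "\<forall>k\<ge>k2. a (r k) \<le> -T \<and> T \<le> b (r k)" using within[OF r(1)] by blast
    show ?thesis
    proof (intro exI[of _ "max k1 k2"] allI impI ballI)
      fix k t assume k: "max k1 k2 \<le> k" and t: "t \<in> {-T..T}"
      then have "a (r k) \<le> t" "t \<le> b (r k)" using k2 by auto
      moreover have "d (H (r k) t) (\<gamma> t) < \<epsilon>" using k1 k t by auto
      ultimately show "a (r k) \<le> t \<and> t \<le> b (r k) \<and> d (h (r k) t) (\<gamma> t) < \<epsilon>" by (simp add: H_def)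
    qed
  qed
  show ?thesis
  proof (intro exI[of _ r] exI[of _ \<gamma>] conjI allI impI)
    show "isometric_on M d \<gamma> UNIV"
      by (rule eventually_isometric_limit_isometric[where H = "\<lambda>k. H (r k)", OF HMr isor lim])
  qed (use r(1) unif in simp_all)
qed

end

section \<open>The limit of the connecting geodesics\<close>

text \<open>Membership of the
  sequences in \<open>X\<^sup>(\<^sup>N\<^sup>)\<^sub>e\<close> is witnessed by \<open>gxn\<close> and \<open>gyn\<close>, so it is not assumed separately.\<close>
locale morse_ray_pair = Metric_space M d for M :: "'a set" and d +
  fixes N :: "real \<Rightarrow> real \<Rightarrow> real" and e :: 'a and xs ys :: "nat \<Rightarrow> 'a" and gxn gyn :: "nat \<Rightarrow> real \<Rightarrow> 'a"
    and gx gy :: "real \<Rightarrow> 'a" and gn :: "nat \<Rightarrow> real \<Rightarrow> 'a"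
  assumes mg: "morse_gauge N" and pr: "proper_mspace M d" and G: "geodesic_mspace M d" and eM: "e \<in> M"
    and cx: "converges_at_infinity d e xs" and cy: "converges_at_infinity d e ys"
    and ne: "\<not> gromov_equiv d e xs ys"
    and hxn: "\<forall>n. isometric_on M d (gxn n) {0..d e (xs n)} \<and> gxn n 0 = e \<and>
            gxn n (d e (xs n)) = xs n \<and> morse M d N (gxn n) {0..d e (xs n)}"
    and hyn: "\<forall>n. isometric_on M d (gyn n) {0..d e (ys n)} \<and> gyn n 0 = e \<and>
            gyn n (d e (ys n)) = ys n \<and> morse M d N (gyn n) {0..d e (ys n)}"
    and gxi: "isometric_on M d gx {0..}" and gx0: "gx 0 = e"
    and gyi: "isometric_on M d gy {0..}" and gy0: "gy 0 = e"
    and lx: "subseq_limit_ray d (\<lambda>n. d e (xs n)) gxn gx"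
    and ly: "subseq_limit_ray d (\<lambda>n. d e (ys n)) gyn gy"
    and hgn: "\<forall>n::nat. isometric_on M d (gn n) {0..d (gx (real n)) (gy (real n))} \<and>
            gn n 0 = gx (real n) \<and> gn n (d (gx (real n)) (gy (real n))) = gy (real n)"
begin

lemma gxn: "isometric_on M d (gxn i) {0..d e (xs i)}" "gxn i 0 = e" "gxn i (d e (xs i)) = xs i"
  "morse M d N (gxn i) {0..d e (xs i)}" "0 \<le> d e (xs i)"
  using hxn by auto

lemma gyn: "isometric_on M d (gyn i) {0..d e (ys i)}" "gyn i 0 = e" "gyn i (d e (ys i)) = ys i"
  "morse M d N (gyn i) {0..d e (ys i)}" "0 \<le> d e (ys i)"
  using hyn by auto

text \<open>The setting is symmetric under exchanging the two sides and reversing each \<open>gn n\<close>.\<close>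
lemma swap_sides: "morse_ray_pair M d N e ys xs gyn gxn gy gx (\<lambda>n t. gn n (d (gx (real n)) (gy (real n)) - t))"
proof unfold_locales
  show "\<not> gromov_equiv d e ys xs" using ne gprod_commute unfolding gromov_equiv_def by metis
  show "\<forall>n. isometric_on M d (\<lambda>t. gn n (d (gx (real n)) (gy (real n)) - t)) {0..d (gy (real n)) (gx (real n))} \<and>
      gn n (d (gx (real n)) (gy (real n)) - 0) = gy (real n) \<and>
      gn n (d (gx (real n)) (gy (real n)) - d (gy (real n)) (gx (real n))) = gx (real n)"
    using hgn isometric_on_reflect[of "gn _" 0] commute by auto
qed (use mg pr G eM cx cy hxn hyn gxi gx0 gyi gy0 lx ly in auto)

text \<open>Unless the connecting geodesics come back to a bounded region infinitely often,
  the two Morse geodesics fellow travel for arbitrarily long, forcing \<open>(x\<^sub>i \<cdot> y\<^sub>j)\<^sub>e \<rightarrow> \<infinity>\<close>.\<close>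
lemma connecting_geodesics_bounded_often:
  "\<exists>R0. \<forall>n0. \<exists>n\<ge>n0. \<exists>t\<in>{0..d (gx (real n)) (gy (real n))}. d e (gn n t) \<le> R0"
proof (rule ccontr)
  assume "\<not> ?thesis"
  then have H: "\<forall>R. \<exists>n0. \<forall>n\<ge>n0. \<forall>t\<in>{0..d (gx (real n)) (gy (real n))}. R < d e (gn n t)"
    by (meson not_le)
  have "gromov_equiv d e xs ys" unfolding gromov_equiv_def
  proof
    fix B :: real
    define m1 where "m1 = N 3 2"
    define m2 where "m2 = N 1 (2*(2*m1)) + 2*m1"
    define m3 where "m3 = N 1 (2*(2*N 3 0)) + 2*N 3 0"
    have nn: "0 \<le> N 3 0" "0 \<le> m1" "0 \<le> m2" "0 \<le> m3" using mg unfolding morse_gauge_def m1_def m2_def m3_def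
      by (auto intro!: add_nonneg_nonneg)
    define B' where "B' = \<bar>B\<bar> + 2*m2 + 2*m3 + N 3 0 + 2"
    obtain n0x where n0x: "\<forall>i\<ge>n0x. \<forall>j\<ge>n0x. B' \<le> gprod d e (xs i) (xs j)"
      using cx unfolding converges_at_infinity_def by blast
    obtain n0y where n0y: "\<forall>i\<ge>n0y. \<forall>j\<ge>n0y. B' \<le> gprod d e (ys i) (ys j)"
      using cy unfolding converges_at_infinity_def by blast
    obtain n where nH: "\<forall>t\<in>{0..d (gx (real n)) (gy (real n))}. \<bar>B\<bar> + m2 + 2*m3 + m1 + 2 < d e (gn n t)"
      using H by blast
    define Lz where "Lz = d (gx (real n)) (gy (real n))"
    have z: "isometric_on M d (gn n) {0..Lz}" "gn n 0 = gx (real n)" "gn n Lz = gy (real n)"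
      using hgn Lz_def by auto
    obtain \<sigma> where \<sigma>: "\<sigma> \<in> {0..Lz}" "\<forall>t\<in>{0..Lz}. d e (gn n \<sigma>) \<le> d e (gn n t)"
      using isometric_on_closest_point[OF z(1) _ eM] Lz_def by auto
    obtain i0 where i0: "i0 \<ge> n0x" "real n \<le> d e (xs i0)" "\<forall>t\<in>{0..real n}. d (gxn i0 t) (gx t) < 1"
      using subseq_limit_rayD[OF lx, of 1 n0x "real n"] by auto
    obtain j0 where j0: "j0 \<ge> n0y" "real n \<le> d e (ys j0)" "\<forall>t\<in>{0..real n}. d (gyn j0 t) (gy t) < 1"
      using subseq_limit_rayD[OF ly, of 1 n0y "real n"] by auto
    have zx: "isometric_on M d (gn n) {0..\<sigma>}" using isometric_on_subset[OF z(1)] \<sigma> by auto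
    have "d (gxn i0 (real n)) (gn n 0) < 1" using i0(3) z(2) by auto
    then obtain u1 where u1: "u1 \<in> {0..d e (xs i0)}" "d (gn n \<sigma>) (gxn i0 u1) \<le> m1"
      using closest_point_near_morse[OF G gxn(4,1,2) _ i0(2) _ zx] \<sigma> unfolding m1_def by auto
    define \<zeta> where "\<zeta> t = gn n (Lz - t)" for t
    have z': "isometric_on M d \<zeta> {0..Lz - \<sigma>}"
      using isometric_on_subset[OF isometric_on_reflect[OF z(1)]] \<sigma> unfolding \<zeta>_def by auto
    have "\<zeta> (Lz - \<sigma>) = gn n \<sigma>" using \<zeta>_def by auto
    moreover have "d (gyn j0 (real n)) (\<zeta> 0) < 1" using j0(3) z(3) unfolding \<zeta>_def by auto
    moreover have "\<forall>t\<in>{0..Lz - \<sigma>}. d e (\<zeta> (Lz - \<sigma>)) \<le> d e (\<zeta> t)" using \<sigma> unfolding \<zeta>_def by auto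
    ultimately obtain u2 where u2: "u2 \<in> {0..d e (ys j0)}" "d (gn n \<sigma>) (gyn j0 u2) \<le> m1"
      using closest_point_near_morse[OF G gyn(4,1,2) _ j0(2) _ z'] \<sigma> unfolding m1_def by auto
    have pM: "gn n \<sigma> \<in> M" using isometric_on_mem[OF z(1) \<sigma>(1)] .
    have au1: "gxn i0 u1 \<in> M" and bu2: "gyn j0 u2 \<in> M" "d e (gyn j0 u2) = u2"
      using geodesic_from_base[OF gxn(1,2) u1(1)] geodesic_from_base[OF gyn(1,2) u2(1)] by auto
    have "\<bar>B\<bar> + m2 + 2*m3 + 2 < u2"
      using triangle[OF eM bu2(1) pM] nH \<sigma> bu2 u2 commute[of "gyn j0 u2" "gn n \<sigma>"] unfolding Lz_def by force
    moreover have "d (gyn j0 u2) (gxn i0 u1) \<le> 2*m1"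
      using triangle[OF bu2(1) pM au1] u1 u2 commute[of "gyn j0 u2" "gn n \<sigma>"] by linarith
    ultimately show "\<exists>n0. \<forall>i\<ge>n0. \<forall>j\<ge>n0. B \<le> gprod d e (xs i) (ys j)"
    proof (intro exI[of _ "max n0x n0y"] allI impI)
      fix i j assume ij: "max n0x n0y \<le> i" "max n0x n0y \<le> j"
      assume "\<bar>B\<bar> + m2 + 2*m3 + 2 < u2" "d (gyn j0 u2) (gxn i0 u1) \<le> 2*m1"
      then have "min u2 (min (gprod d e (ys j) (ys j0) - N 3 0) (gprod d e (xs i) (xs i0) - N 3 0 - m2))
          - m2 - 2 * m3 \<le> gprod d e (xs i) (ys j)"
        using gprod_ge_fellow_travel[OF mg G gxn(4,1,2,3,5) gyn(4,1,2,3,5) gxn(4,1,2,3,5) gyn(4,1,2,3,5) u1(1) u2(1)]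
        unfolding m2_def m3_def by blast
      moreover have "B' \<le> gprod d e (xs i) (xs i0)" "B' \<le> gprod d e (ys j) (ys j0)"
        using n0x n0y ij i0 j0 by auto
      ultimately show "B \<le> gprod d e (xs i) (ys j)"
        using \<open>\<bar>B\<bar> + m2 + 2*m3 + 2 < u2\<close> nn unfolding B'_def by (simp add: min_def split: if_splits)
    qed
  qed
  then show False using ne by simp
qed

lemma connecting_geodesics_subseq:
  obtains R0 and ns :: "nat \<Rightarrow> nat" and \<sigma>s where "0 \<le> R0" "strict_mono ns"
    "\<forall>k. \<sigma>s k \<in> {0..d (gx (real (ns k))) (gy (real (ns k)))} \<and>
       (\<forall>t\<in>{0..d (gx (real (ns k))) (gy (real (ns k)))}. d e (gn (ns k) (\<sigma>s k)) \<le> d e (gn (ns k) t)) \<and>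
       d e (gn (ns k) (\<sigma>s k)) \<le> R0"
proof -
  define L where "L n = d (gx (real n)) (gy (real n))" for n
  obtain R0 where R0: "\<forall>n0. \<exists>n\<ge>n0. \<exists>t\<in>{0..L n}. d e (gn n t) \<le> R0"
    using connecting_geodesics_bounded_often unfolding L_def by blast
  define S where "S = {n. \<exists>t\<in>{0..L n}. d e (gn n t) \<le> R0}"
  have "infinite S" using R0 unfolding S_def infinite_nat_iff_unbounded_le by auto
  then have nsm: "strict_mono (enumerate S)" and nsS: "\<And>k::nat. enumerate S k \<in> S"
    using strict_mono_enumerate enumerate_in_set by blast+
  have "\<exists>\<sigma>. \<sigma> \<in> {0..L n} \<and> (\<forall>t\<in>{0..L n}. d e (gn n \<sigma>) \<le> d e (gn n t))" for n
    using isometric_on_closest_point[OF _ _ eM] hgn unfolding L_def by fastforce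
  then obtain \<sigma> where \<sigma>: "\<And>n. \<sigma> n \<in> {0..L n} \<and> (\<forall>t\<in>{0..L n}. d e (gn n (\<sigma> n)) \<le> d e (gn n t))"
    by metis
  have \<sigma>R: "d e (gn n (\<sigma> n)) \<le> R0" if "n \<in> S" for n
    using that \<sigma>[of n] unfolding S_def by force
  have "0 \<le> R0" using \<sigma>R[OF nsS[of 0]] nonneg[of e] by (meson order_trans)
  then show thesis using that[of R0 "enumerate S" "\<lambda>k. \<sigma> (enumerate S k)"] nsm \<sigma> \<sigma>R nsS
    unfolding L_def by blast
qed

end

text \<open>A limit \<open>\<gamma>\<close> of the connecting geodesics, reparametrised so that time 0 is the
  point closest to \<open>e\<close>.\<close>
locale morse_ray_pair_limit = morse_ray_pair +
  fixes R0 :: real and \<psi> :: "nat \<Rightarrow> nat" and \<sigma> :: "nat \<Rightarrow> real" and \<gamma> :: "real \<Rightarrow> 'a"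
  assumes R0: "0 \<le> R0" and mono: "strict_mono \<psi>"
    and sig: "\<forall>k. \<sigma> k \<in> {0..d (gx (real (\<psi> k))) (gy (real (\<psi> k)))} \<and>
       (\<forall>t\<in>{0..d (gx (real (\<psi> k))) (gy (real (\<psi> k)))}. d e (gn (\<psi> k) (\<sigma> k)) \<le> d e (gn (\<psi> k) t)) \<and>
       d e (gn (\<psi> k) (\<sigma> k)) \<le> R0"
    and giso: "isometric_on M d \<gamma> UNIV"
    and unif: "\<forall>T \<epsilon>. 0 < \<epsilon> \<longrightarrow> (\<exists>k0::nat. \<forall>k\<ge>k0. \<forall>t\<in>{-T..T}.
              0 \<le> t + \<sigma> k \<and> t + \<sigma> k \<le> d (gx (real (\<psi> k))) (gy (real (\<psi> k))) \<and>
              d (gn (\<psi> k) (t + \<sigma> k)) (\<gamma> t) < \<epsilon>)"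
begin

lemma swap_sides_limit:
  "morse_ray_pair_limit M d N e ys xs gyn gxn gy gx (\<lambda>n t. gn n (d (gx (real n)) (gy (real n)) - t))
     R0 \<psi> (\<lambda>k. d (gx (real (\<psi> k))) (gy (real (\<psi> k))) - \<sigma> k) (\<lambda>t. \<gamma> (- t))"
proof (rule morse_ray_pair_limit.intro[OF swap_sides], unfold_locales)
  show "isometric_on M d (\<lambda>t. \<gamma> (- t)) UNIV"
    using giso unfolding isometric_on_def by (auto simp: abs_minus_commute)
  show "\<forall>k. d (gx (real (\<psi> k))) (gy (real (\<psi> k))) - \<sigma> k \<in> {0..d (gy (real (\<psi> k))) (gx (real (\<psi> k)))} \<and>
       (\<forall>t\<in>{0..d (gy (real (\<psi> k))) (gx (real (\<psi> k)))}.
         d e (gn (\<psi> k) (d (gx (real (\<psi> k))) (gy (real (\<psi> k))) - (d (gx (real (\<psi> k))) (gy (real (\<psi> k))) - \<sigma> k)))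
         \<le> d e (gn (\<psi> k) (d (gx (real (\<psi> k))) (gy (real (\<psi> k))) - t))) \<and>
       d e (gn (\<psi> k) (d (gx (real (\<psi> k))) (gy (real (\<psi> k))) - (d (gx (real (\<psi> k))) (gy (real (\<psi> k))) - \<sigma> k))) \<le> R0"
    using sig commute by auto
  show "\<forall>T \<epsilon>. 0 < \<epsilon> \<longrightarrow> (\<exists>k0. \<forall>k\<ge>k0. \<forall>t\<in>{-T..T}.
      0 \<le> t + (d (gx (real (\<psi> k))) (gy (real (\<psi> k))) - \<sigma> k) \<and>
      t + (d (gx (real (\<psi> k))) (gy (real (\<psi> k))) - \<sigma> k) \<le> d (gy (real (\<psi> k))) (gx (real (\<psi> k))) \<and>
      d (gn (\<psi> k) (d (gx (real (\<psi> k))) (gy (real (\<psi> k))) - (t + (d (gx (real (\<psi> k))) (gy (real (\<psi> k))) - \<sigma> k))))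
        (\<gamma> (- t)) < \<epsilon>)"
  proof (intro allI impI)
    fix T \<epsilon> :: real assume "0 < \<epsilon>"
    then obtain k0 where k0: "\<forall>k\<ge>k0. \<forall>t\<in>{-T..T}. 0 \<le> t + \<sigma> k \<and>
        t + \<sigma> k \<le> d (gx (real (\<psi> k))) (gy (real (\<psi> k))) \<and> d (gn (\<psi> k) (t + \<sigma> k)) (\<gamma> t) < \<epsilon>"
      using unif by blast
    show "\<exists>k0. \<forall>k\<ge>k0. \<forall>t\<in>{-T..T}.
      0 \<le> t + (d (gx (real (\<psi> k))) (gy (real (\<psi> k))) - \<sigma> k) \<and>
      t + (d (gx (real (\<psi> k))) (gy (real (\<psi> k))) - \<sigma> k) \<le> d (gy (real (\<psi> k))) (gx (real (\<psi> k))) \<and>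
      d (gn (\<psi> k) (d (gx (real (\<psi> k))) (gy (real (\<psi> k))) - (t + (d (gx (real (\<psi> k))) (gy (real (\<psi> k))) - \<sigma> k))))
        (\<gamma> (- t)) < \<epsilon>"
    proof (intro exI[of _ k0] allI impI ballI)
      fix k t assume k: "k0 \<le> k" and "t \<in> {-T..T}"
      then have "- t \<in> {-T..T}" by auto
      then have "0 \<le> - t + \<sigma> k \<and> - t + \<sigma> k \<le> d (gx (real (\<psi> k))) (gy (real (\<psi> k))) \<and>
          d (gn (\<psi> k) (- t + \<sigma> k)) (\<gamma> (- t)) < \<epsilon>" using k0 k by blast
      then show "0 \<le> t + (d (gx (real (\<psi> k))) (gy (real (\<psi> k))) - \<sigma> k) \<and>
        t + (d (gx (real (\<psi> k))) (gy (real (\<psi> k))) - \<sigma> k) \<le> d (gy (real (\<psi> k))) (gx (real (\<psi> k))) \<and>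
        d (gn (\<psi> k) (d (gx (real (\<psi> k))) (gy (real (\<psi> k))) - (t + (d (gx (real (\<psi> k))) (gy (real (\<psi> k))) - \<sigma> k))))
          (\<gamma> (- t)) < \<epsilon>"
        using commute[of "gy (real (\<psi> k))"] by (simp add: algebra_simps)
    qed
  qed
qed (use R0 mono in auto)

lemma exists_large_index: "\<exists>k\<ge>k0. X \<le> real (\<psi> k)"
proof -
  define k where "k = max k0 (nat \<lceil>X\<rceil>)"
  have "nat \<lceil>X\<rceil> \<le> \<psi> k" using seq_suble[OF mono, of k] unfolding k_def by linarith
  then have "X \<le> real (\<psi> k)" by linarith
  moreover have "k0 \<le> k" unfolding k_def by simp
  ultimately show ?thesis by blast
qed

text \<open>Points of \<open>\<gamma>\<close> at negative times are close to the ray \<open>gx\<close>: for large \<open>k\<close> the corresponding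
  point of \<open>gn (\<psi> k)\<close> lies on the part before its closest point to \<open>e\<close>, which stays near the
  Morse geodesic \<open>gxn i\<close> tracking \<open>gx\<close>.\<close>
lemma near_left_ray:
  assumes s: "s \<le> 0" and \<delta>: "0 < \<delta>"
  shows "\<exists>u. 0 \<le> u \<and> u \<le> d e (\<gamma> s) + N 3 0 + 1 \<and> d (\<gamma> s) (gx u) \<le> N 3 0 + \<delta>"
proof -
  define \<epsilon> where "\<epsilon> = min \<delta> 1 / 3"
  have \<epsilon>: "0 < \<epsilon>" "\<epsilon> \<le> 1/3" "3*\<epsilon> \<le> \<delta>" using \<delta> unfolding \<epsilon>_def by auto
  define r0 where "r0 = N 3 0"
  have r0: "0 \<le> r0" using mg unfolding r0_def morse_gauge_def by auto
  obtain k0 where k0: "\<forall>k\<ge>k0. \<forall>t\<in>{-\<bar>s\<bar>..\<bar>s\<bar>}. 0 \<le> t + \<sigma> k \<and> t + \<sigma> k \<le> d (gx (real (\<psi> k))) (gy (real (\<psi> k))) \<and>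
              d (gn (\<psi> k) (t + \<sigma> k)) (\<gamma> t) < \<epsilon>" using unif \<epsilon> by blast
  obtain k where k: "k \<ge> k0" "3*R0 + 4 + \<bar>s\<bar> + d e (\<gamma> s) + r0 + 2 \<le> real (\<psi> k)"
    using exists_large_index by blast
  define n where "n = real (\<psi> k)"
  define L where "L = d (gx n) (gy n)"
  have z: "isometric_on M d (gn (\<psi> k)) {0..L}" "gn (\<psi> k) 0 = gx n" using hgn L_def n_def by auto
  have sk: "\<sigma> k \<in> {0..L}" "\<forall>t\<in>{0..L}. d e (gn (\<psi> k) (\<sigma> k)) \<le> d e (gn (\<psi> k) t)" "d e (gn (\<psi> k) (\<sigma> k)) \<le> R0"
    using sig L_def n_def by auto
  have "d e (gn (\<psi> k) 0) = n" using z(2) ray_from_base[OF gxi gx0, of n] n_def by simp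
  then have sb: "n - R0 \<le> \<sigma> k" using isometric_on_base_dist_bounds(1)[OF z(1) sk(1) eM] sk(3) by linarith
  have "s \<in> {-\<bar>s\<bar>..\<bar>s\<bar>}" by auto
  then have conv: "d (gn (\<psi> k) (s + \<sigma> k)) (\<gamma> s) < \<epsilon>" using k0 k(1) by blast
  obtain i where i: "n \<le> d e (xs i)" "\<forall>t\<in>{0..n}. d (gxn i t) (gx t) < \<epsilon>"
    using subseq_limit_rayD[OF lx \<epsilon>(1), of 0 n] by auto
  have n0: "0 \<le> n" using n_def by simp
  have c: "d (gxn i n) (gn (\<psi> k) 0) < 1" using i(2) n0 z(2) \<epsilon> by force
  have zs: "isometric_on M d (gn (\<psi> k)) {0..\<sigma> k}" using isometric_on_subset[OF z(1)] sk by auto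
  have nbig: "3*R0 + 4 \<le> n" using k(2) R0 r0 n_def abs_ge_zero[of s] nonneg[of e "\<gamma> s"] by linarith
  have tI: "s + \<sigma> k \<in> {2..\<sigma> k}" unfolding atLeastAtMost_iff using sb s k(2) r0 n_def R0 nonneg[of e "\<gamma> s"] by linarith
  have cl: "\<forall>t\<in>{0..\<sigma> k}. d e (gn (\<psi> k) (\<sigma> k)) \<le> d e (gn (\<psi> k) t)" using sk by auto
  obtain u where u: "u \<in> {0..d e (xs i)}" "d (gn (\<psi> k) (s + \<sigma> k)) (gxn i u) \<le> r0"
    using closest_segment_near_morse[OF G gxn(4,1,2) n0 i(1) c zs cl sk(3) sb nbig tI] r0_def by auto
  have Ms: "\<gamma> s \<in> M" "gn (\<psi> k) (s + \<sigma> k) \<in> M" "gxn i u \<in> M" "d e (gxn i u) = u"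
    using isometric_on_mem[OF giso] isometric_on_mem[OF zs] tI geodesic_from_base[OF gxn(1,2) u(1)] by auto
  have g1: "d (\<gamma> s) (gxn i u) < r0 + \<epsilon>"
    using triangle[OF Ms(1-3)] conv u commute[of "\<gamma> s" "gn (\<psi> k) (s + \<sigma> k)"] by linarith
  have ub: "u \<le> d e (\<gamma> s) + r0 + \<epsilon>" using triangle[OF eM Ms(1) Ms(3)] g1 Ms(4) by linarith
  then have "d (gxn i u) (gx u) < \<epsilon>" using i(2) u(1) k(2) n_def \<epsilon> r0 R0 by auto
  then have "d (\<gamma> s) (gx u) \<le> N 3 0 + \<delta>"
    using triangle[OF Ms(1,3)] ray_from_base[OF gxi gx0, of u] u(1) g1 \<epsilon> unfolding r0_def by force
  then show ?thesis using ub u(1) \<epsilon> unfolding r0_def by (intro exI[of _ u]) auto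
qed

lemma near_right_ray:
  assumes "0 \<le> s" and "0 < \<delta>"
  shows "\<exists>u. 0 \<le> u \<and> u \<le> d e (\<gamma> s) + N 3 0 + 1 \<and> d (\<gamma> s) (gy u) \<le> N 3 0 + \<delta>"
proof -
  interpret swapped: morse_ray_pair_limit M d N e ys xs gyn gxn gy gx
    "\<lambda>n t. gn n (d (gx (real n)) (gy (real n)) - t)" R0 \<psi>
    "\<lambda>k. d (gx (real (\<psi> k))) (gy (real (\<psi> k))) - \<sigma> k" "\<lambda>t. \<gamma> (- t)"
    by (rule swap_sides_limit)
  show ?thesis using swapped.near_left_ray[of "- s" \<delta>] assms by simp
qed

lemma near_common_morse_left:
  assumes "s1 \<le> 0" "s2 \<le> 0"
  shows "near_common_morse M d N (N 3 0 + 1) (\<gamma> s1) (\<gamma> s2)"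
proof -
  obtain u1 where u1: "0 \<le> u1" "d (\<gamma> s1) (gx u1) \<le> N 3 0 + 1/2" using near_left_ray[OF assms(1), of "1/2"] by auto
  obtain u2 where u2: "0 \<le> u2" "d (\<gamma> s2) (gx u2) \<le> N 3 0 + 1/2" using near_left_ray[OF assms(2), of "1/2"] by auto
  obtain i where i: "max u1 u2 \<le> d e (xs i)" "\<forall>t\<in>{0..max u1 u2}. d (gxn i t) (gx t) < 1/2"
    using subseq_limit_rayD[OF lx, of "1/2" 0 "max u1 u2"] by auto
  have I: "u1 \<in> {0..d e (xs i)}" "u2 \<in> {0..d e (xs i)}" using i u1 u2 by auto
  have close: "d (\<gamma> s) (gxn i u) \<le> N 3 0 + 1"
    if u: "u \<in> {0..max u1 u2}" "u \<in> {0..d e (xs i)}" "d (\<gamma> s) (gx u) \<le> N 3 0 + 1/2" for s u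
  proof -
    have M3: "\<gamma> s \<in> M" "gx u \<in> M" "gxn i u \<in> M"
      using isometric_on_mem[OF giso] ray_from_base[OF gxi gx0, of u] geodesic_from_base[OF gxn(1,2) u(2)] u(1)
      by auto
    have "d (gxn i u) (gx u) < 1/2" using i(2) u(1) by blast
    then show ?thesis using triangle[OF M3] u(3) commute[of "gx u" "gxn i u"] by linarith
  qed
  have "d (\<gamma> s1) (gxn i u1) \<le> N 3 0 + 1" "d (\<gamma> s2) (gxn i u2) \<le> N 3 0 + 1"
    using close[of u1 s1] close[of u2 s2] I u1 u2 by auto
  then show ?thesis unfolding near_common_morse_def using gxn(4,1) I by blast
qed

lemma near_common_morse_right:
  assumes "0 \<le> s1" "0 \<le> s2"
  shows "near_common_morse M d N (N 3 0 + 1) (\<gamma> s1) (\<gamma> s2)"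
proof -
  interpret swapped: morse_ray_pair_limit M d N e ys xs gyn gxn gy gx
    "\<lambda>n t. gn n (d (gx (real n)) (gy (real n)) - t)" R0 \<psi>
    "\<lambda>k. d (gx (real (\<psi> k))) (gy (real (\<psi> k))) - \<sigma> k" "\<lambda>t. \<gamma> (- t)"
    by (rule swap_sides_limit)
  show ?thesis using swapped.near_common_morse_left[of "- s1" "- s2"] assms by simp
qed

lemma limit_morse: "morse M d (limit_gauge N (N 3 0 + 1)) \<gamma> UNIV"
proof (rule biinfinite_geodesic_morse[OF mg G giso])
  show "0 \<le> N 3 0 + 1" using mg unfolding morse_gauge_def by (smt (verit) one_le_numeral)
qed (use near_common_morse_left near_common_morse_right in auto)

lemma limit_in_nbhd_rays: "\<gamma> ` UNIV \<subseteq> nbhd M d (4 * N 3 0) (gx ` {0..} \<union> gy ` {0..})"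
proof
  fix x assume "x \<in> \<gamma> ` UNIV"
  then obtain s where x: "x = \<gamma> s" by auto
  have xM: "x \<in> M" using isometric_on_mem[OF giso] x by auto
  have r0: "0 \<le> N 3 0" using mg unfolding morse_gauge_def by auto
  then have U: "0 \<le> d e (\<gamma> s) + N 3 0 + 1" by (simp add: add_nonneg_nonneg)
  define U where "U = d e (\<gamma> s) + N 3 0 + 1"
  have near: "\<exists>u\<ge>0. d x (g u) \<le> N 3 0"
    if "isometric_on M d g {0..}" "\<And>\<delta>. 0 < \<delta> \<Longrightarrow> \<exists>u. 0 \<le> u \<and> u \<le> U \<and> d x (g u) \<le> N 3 0 + \<delta>" for g
    using ray_closest_within[OF that(1) xM U[folded U_def]] that(2) by blast
  have "\<exists>u\<ge>0. d x (gx u) \<le> N 3 0 \<or> d x (gy u) \<le> N 3 0"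
  proof (cases "s \<le> 0")
    case True
    then show ?thesis using near[OF gxi] near_left_ray[OF True] x unfolding U_def by blast
  next
    case False
    then show ?thesis using near[OF gyi] near_right_ray[of s] x unfolding U_def by auto
  qed
  then obtain u where u: "0 \<le> u" "d x (gx u) \<le> 4 * N 3 0 \<or> d x (gy u) \<le> 4 * N 3 0"
    using r0 by force
  then show "x \<in> nbhd M d (4 * N 3 0) (gx ` {0..} \<union> gy ` {0..})"
    using xM unfolding nbhd_def by blast
qed

end

context morse_ray_pair begin

lemma limit_geodesic_exists:
  "\<exists>\<gamma> \<psi> s. isometric_on M d \<gamma> UNIV \<and> morse M d (limit_gauge N (N 3 0 + 1)) \<gamma> UNIV \<and> strict_mono (\<psi> :: nat \<Rightarrow> nat) \<and>
     (\<forall>T \<epsilon>. 0 < \<epsilon> \<longrightarrow> (\<exists>k0::nat. \<forall>k\<ge>k0. \<forall>t\<in>{-T..T}.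
        0 \<le> t + s k \<and> t + s k \<le> d (gx (real (\<psi> k))) (gy (real (\<psi> k))) \<and>
        d (gn (\<psi> k) (t + s k)) (\<gamma> t) < \<epsilon>)) \<and>
     \<gamma> ` UNIV \<subseteq> nbhd M d (4 * N 3 0) (gx ` {0..} \<union> gy ` {0..})"
proof -
  obtain R0 and ns :: "nat \<Rightarrow> nat" and \<sigma>s where R0: "0 \<le> R0" and nsm: "strict_mono ns"
    and \<sigma>s: "\<forall>k. \<sigma>s k \<in> {0..d (gx (real (ns k))) (gy (real (ns k)))} \<and>
       (\<forall>t\<in>{0..d (gx (real (ns k))) (gy (real (ns k)))}. d e (gn (ns k) (\<sigma>s k)) \<le> d e (gn (ns k) t)) \<and>
       d e (gn (ns k) (\<sigma>s k)) \<le> R0"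
    by (rule connecting_geodesics_subseq)
  define L where "L k = d (gx (real (ns k))) (gy (real (ns k)))" for k
  have zk: "isometric_on M d (gn (ns k)) {0..L k}" "d e (gn (ns k) 0) = real (ns k)"
    "d e (gn (ns k) (L k)) = real (ns k)" for k
    using hgn ray_from_base[OF gxi gx0] ray_from_base[OF gyi gy0] unfolding L_def by auto
  have bounds: "real (ns k) - R0 \<le> \<sigma>s k" "real (ns k) - R0 \<le> L k - \<sigma>s k" for k
    using isometric_on_base_dist_bounds[OF zk(1) _ eM, of "\<sigma>s k"] \<sigma>s zk(2,3) unfolding L_def by force+
  define h where "h k t = gn (ns k) (t + \<sigma>s k)" for k t
  have hh: "\<forall>k. isometric_on M d (h k) {- \<sigma>s k..L k - \<sigma>s k} \<and> - \<sigma>s k \<le> 0 \<and> 0 \<le> L k - \<sigma>s k \<and> d e (h k 0) \<le> R0"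
    using isometric_on_translate[OF zk(1), where c = "\<sigma>s _"] \<sigma>s unfolding h_def L_def by auto
  have ab: "\<forall>T. \<exists>k0. \<forall>k\<ge>k0. - \<sigma>s k \<le> -T \<and> T \<le> L k - \<sigma>s k"
  proof
    fix T
    show "\<exists>k0. \<forall>k\<ge>k0. - \<sigma>s k \<le> -T \<and> T \<le> L k - \<sigma>s k"
    proof (intro exI[of _ "nat \<lceil>T + R0\<rceil>"] allI impI)
      fix k assume "nat \<lceil>T + R0\<rceil> \<le> k"
      then have "T + R0 \<le> real (ns k)" using seq_suble[OF nsm, of k] by linarith
      then show "- \<sigma>s k \<le> -T \<and> T \<le> L k - \<sigma>s k" using bounds[of k] by auto
    qed
  qed
  obtain r :: "nat \<Rightarrow> nat" and \<gamma> where r: "strict_mono r" "isometric_on M d \<gamma> UNIV"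
    "\<forall>T \<epsilon>. 0 < \<epsilon> \<longrightarrow> (\<exists>k0. \<forall>k\<ge>k0. \<forall>t\<in>{-T..T}. - \<sigma>s (r k) \<le> t \<and> t \<le> L (r k) - \<sigma>s (r k) \<and>
      d (h (r k) t) (\<gamma> t) < \<epsilon>)"
    using geodesic_subseq_limit[OF pr eM hh ab] by blast
  interpret morse_ray_pair_limit M d N e xs ys gxn gyn gx gy gn R0 "ns \<circ> r" "\<sigma>s \<circ> r" \<gamma>
  proof unfold_locales
    show "strict_mono (ns \<circ> r)" using nsm r(1) by (rule strict_mono_o)
    show "\<forall>T \<epsilon>. 0 < \<epsilon> \<longrightarrow> (\<exists>k0. \<forall>k\<ge>k0. \<forall>t\<in>{-T..T}. 0 \<le> t + (\<sigma>s \<circ> r) k \<and>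
      t + (\<sigma>s \<circ> r) k \<le> d (gx (real ((ns \<circ> r) k))) (gy (real ((ns \<circ> r) k))) \<and>
      d (gn ((ns \<circ> r) k) (t + (\<sigma>s \<circ> r) k)) (\<gamma> t) < \<epsilon>)"
    proof (intro allI impI)
      fix T \<epsilon> :: real assume "0 < \<epsilon>"
      then obtain k0 where k0: "\<forall>k\<ge>k0. \<forall>t\<in>{-T..T}. - \<sigma>s (r k) \<le> t \<and> t \<le> L (r k) - \<sigma>s (r k) \<and>
          d (h (r k) t) (\<gamma> t) < \<epsilon>" using r(3) by blast
      show "\<exists>k0. \<forall>k\<ge>k0. \<forall>t\<in>{-T..T}. 0 \<le> t + (\<sigma>s \<circ> r) k \<and>
        t + (\<sigma>s \<circ> r) k \<le> d (gx (real ((ns \<circ> r) k))) (gy (real ((ns \<circ> r) k))) \<and>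
        d (gn ((ns \<circ> r) k) (t + (\<sigma>s \<circ> r) k)) (\<gamma> t) < \<epsilon>"
      proof (intro exI[of _ k0] allI impI ballI)
        fix k t assume "k0 \<le> k" "t \<in> {-T..T}"
        then have "- \<sigma>s (r k) \<le> t \<and> t \<le> L (r k) - \<sigma>s (r k) \<and> d (h (r k) t) (\<gamma> t) < \<epsilon>"
          using k0 by blast
        then show "0 \<le> t + (\<sigma>s \<circ> r) k \<and>
          t + (\<sigma>s \<circ> r) k \<le> d (gx (real ((ns \<circ> r) k))) (gy (real ((ns \<circ> r) k))) \<and>
          d (gn ((ns \<circ> r) k) (t + (\<sigma>s \<circ> r) k)) (\<gamma> t) < \<epsilon>"
          unfolding h_def L_def by auto
      qed
    qed
  qed (use R0 \<sigma>s r(2) in auto)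
  show ?thesis using limit_morse limit_in_nbhd_rays r(2) strict_mono_o[OF nsm r(1)] unif by blast
qed

end

theorem lemma3p4:
  fixes N :: "real \<Rightarrow> real \<Rightarrow> real"
  assumes "morse_gauge N"
  shows "\<exists>N'. morse_gauge N' \<and>
    (\<forall>(M :: 'a set) d e xs ys gxn gyn gx gy gn.
       Metric_space M d \<and> proper_mspace M d \<and> geodesic_mspace M d \<and> e \<in> M \<and>
       (\<forall>n. xs n \<in> morse_stratum M d N e) \<and> (\<forall>n. ys n \<in> morse_stratum M d N e) \<and>
       converges_at_infinity d e xs \<and> converges_at_infinity d e ys \<and>
       \<not> gromov_equiv d e xs ys \<and>
       (\<forall>n. isometric_on M d (gxn n) {0..d e (xs n)} \<and> gxn n 0 = e \<and>
            gxn n (d e (xs n)) = xs n \<and> morse M d N (gxn n) {0..d e (xs n)}) \<and>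
       (\<forall>n. isometric_on M d (gyn n) {0..d e (ys n)} \<and> gyn n 0 = e \<and>
            gyn n (d e (ys n)) = ys n \<and> morse M d N (gyn n) {0..d e (ys n)}) \<and>
       isometric_on M d gx {0..} \<and> gx 0 = e \<and>
       isometric_on M d gy {0..} \<and> gy 0 = e \<and>
       subseq_limit_ray d (\<lambda>n. d e (xs n)) gxn gx \<and>
       subseq_limit_ray d (\<lambda>n. d e (ys n)) gyn gy \<and>
       (\<forall>n::nat. isometric_on M d (gn n) {0..d (gx (real n)) (gy (real n))} \<and>
            gn n 0 = gx (real n) \<and> gn n (d (gx (real n)) (gy (real n))) = gy (real n))
     \<longrightarrow>
       (\<exists>\<gamma> \<psi> s. isometric_on M d \<gamma> UNIV \<and> morse M d N' \<gamma> UNIV \<and> strict_mono (\<psi> :: nat \<Rightarrow> nat) \<and>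
          (\<forall>T \<epsilon>. 0 < \<epsilon> \<longrightarrow> (\<exists>k0::nat. \<forall>k\<ge>k0. \<forall>t\<in>{-T..T}.
              0 \<le> t + s k \<and> t + s k \<le> d (gx (real (\<psi> k))) (gy (real (\<psi> k))) \<and>
              d (gn (\<psi> k) (t + s k)) (\<gamma> t) < \<epsilon>)) \<and>
          \<gamma> ` UNIV \<subseteq> nbhd M d (4 * N 3 0) (gx ` {0..} \<union> gy ` {0..})))"
proof (intro exI[of _ "limit_gauge N (N 3 0 + 1)"] conjI allI impI)
  have "0 \<le> N 3 0 + 1" using assms unfolding morse_gauge_def by (smt (verit) one_le_numeral)
  then show "morse_gauge (limit_gauge N (N 3 0 + 1))" by (rule morse_gauge_limit_gauge[OF assms])
qed (elim conjE, rule morse_ray_pair.limit_geodesic_exists, rule morse_ray_pair.intro,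
    simp_all add: morse_ray_pair_axioms_def assms)

end
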